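(* Let $\kappa>0$ depend on $\beta>0$ with $\tilde\kappa=\kappa\beta<\frac1\pi$, and let $\varphi_\beta$ be a minimizer of $F_{\beta,\kappa}$ in $\mathcal J$. If $\tilde\kappa$ is independent of $\beta$, then $\varphi_\beta(1)=\arcsin(2\kappa\beta)+o_\beta(\beta^n)$ for all $n\in\mathbb N^*$; in particular, for $\beta$ small enough, $0\le\varphi_\beta(x)\le\varphi_\beta(1)<\frac\pi2$ for all $x\in[0,1]$. If instead $\tilde\kappa=o_\beta(1)$, then $\varphi_\beta(1)=2\kappa\beta(1+o_\beta(1))$.
   Context: For parameters $\beta>0$ and $\kappa>0$ define, for $\varphi\in H^1((0,1))$, $$F_{\beta,\kappa}(\varphi)=\frac18\int_0^1\left(\varphi'(x)^2+\frac{1}{\beta^2}\sin^2\varphi(x)\right)dx-\frac{\kappa}{2}\int_0^1\varphi'(x)\,dx,$$ and $\mathcal J=\{\varphi\in H^1((0,1)):\varphi(0)=0\}$. The notation $o_\beta$ refers to the limit $\beta\to0$. *)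

theory Defs
  imports "HOL-Analysis.Analysis" "HOL-Library.Landau_Symbols"
begin

text \<open>H^1((0,1)) in one dimension: phi is (on [0,1]) the primitive of a square-integrable
  function g, which is then its weak derivative phi'.\<close>
definition weak_deriv_H1 :: "(real \<Rightarrow> real) \<Rightarrow> (real \<Rightarrow> real) \<Rightarrow> bool" where
  "weak_deriv_H1 \<phi> g \<longleftrightarrow>
     g \<in> borel_measurable lborel \<and>
     set_integrable lborel {0..1} (\<lambda>t. (g t)\<^sup>2) \<and>
     (\<forall>x\<in>{0..1}. \<phi> x = \<phi> 0 + (LBINT t=0..x. g t))"

definition H1 :: "(real \<Rightarrow> real) set" where
  "H1 = {\<phi>. \<exists>g. weak_deriv_H1 \<phi> g}"

definition J_set :: "(real \<Rightarrow> real) set" where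
  "J_set = {\<phi>. \<phi> \<in> H1 \<and> \<phi> 0 = 0}"

definition F_energy :: "real \<Rightarrow> real \<Rightarrow> (real \<Rightarrow> real) \<Rightarrow> (real \<Rightarrow> real) \<Rightarrow> real" where
  "F_energy \<beta> \<kappa> \<phi> g =
     1/8 * (LINT x:{0..1}|lborel. (g x)\<^sup>2 + (sin (\<phi> x))\<^sup>2 / \<beta>\<^sup>2)
     - \<kappa>/2 * (LINT x:{0..1}|lborel. g x)"

definition is_minimizer :: "real \<Rightarrow> real \<Rightarrow> (real \<Rightarrow> real) \<Rightarrow> bool" where
  "is_minimizer \<beta> \<kappa> \<phi> \<longleftrightarrow>
     \<phi> \<in> J_set \<and>
     (\<exists>g. weak_deriv_H1 \<phi> g \<and>
        (\<forall>\<psi> h. \<psi> \<in> J_set \<longrightarrow> weak_deriv_H1 \<psi> h \<longrightarrow> F_energy \<beta> \<kappa> \<phi> g \<le> F_energy \<beta> \<kappa> \<psi> h))"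

end

(*
  By AM-GM, the energy density of phi on [u, v] is at least 2/beta times the variation of
  W o phi, where W is the primitive of |sin|.  Hence, with s = 2 kappa beta, the rescaled
  energy 4 beta F(phi) is bounded below by |W(phi x)| + |W(phi 1) - W(phi x)| - s phi(1) for
  every x, in particular by the tilted potential V(y) = W(y) - s y at y = phi(1).  The kink
  solving beta u' = sin u and ending at arcsin s, the minimum point of V, is a competitor whose
  rescaled energy exceeds min V by O(s^2 exp(-1/beta)).  Since V grows quadratically near its
  minimum point, (phi(1) - arcsin s)^2 = O(s^2 exp(-1/beta)), which is o(beta^n) for all n; when
  s tends to 0 one uses arcsin s = s + O(s^3) instead.  The same comparison keeps phi below
  2 pi/3, and then flattening any excursion of phi below 0 or above phi(1) would lower the
  energy, so 0 <= phi <= phi(1).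
*)

theory Submission
  imports Defs "HOL-Real_Asymp.Real_Asymp"
begin

lemma sin_two_arctan: "sin (2 * arctan z) = 2 * z / (1 + z\<^sup>2)"
proof -
  have "sin (2 * arctan z) = 2 * z / (sqrt (1 + z\<^sup>2) * sqrt (1 + z\<^sup>2))"
    by (simp add: sin_double sin_arctan cos_arctan)
  also have "sqrt (1 + z\<^sup>2) * sqrt (1 + z\<^sup>2) = 1 + z\<^sup>2"
    by (simp add: add_nonneg_nonneg)
  finally show ?thesis .
qed

lemma x_minus_sin_le: "(x::real) - sin x \<le> \<bar>x\<bar> ^ 3 / 6"
proof -
  have "\<bar>sin x - x\<bar> \<le> \<bar>x\<bar> ^ 3 / 6"
    using Maclaurin_sin_bound[of x 3] by (simp add: sin_coeff_def eval_nat_numeral)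
  then show ?thesis by linarith
qed

lemma sin_le_sin_between:
  assumes "0 \<le> y" "y \<le> z" "z \<le> pi - y"
  shows "sin y \<le> sin z"
proof (cases "z \<le> pi / 2")
  case True
  then show ?thesis
    using assms by (subst sin_mono_le_eq) auto
next
  case False
  then have "sin y \<le> sin (pi - z)"
    using assms by (subst sin_mono_le_eq) auto
  then show ?thesis
    by simp
qed

lemma tan_half_le_sin:
  assumes "0 < x" "x < pi / 2"
  shows "tan (x / 2) \<le> sin x"
proof -
  have "tan (x / 2) = sin x / (cos x + 1)"
    using tan_half[of "x / 2"] by simp
  also have "\<dots> \<le> sin x"
    using assms sin_gt_zero[of x] cos_gt_zero_pi[of x] by (simp add: divide_le_eq_1 field_simps)
  finally show ?thesis .
qed

lemma MVT_along_continuous: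
  fixes F f \<phi> :: "real \<Rightarrow> real"
  assumes F: "\<And>y. (F has_real_derivative f y) (at y)"
    and \<phi>: "continuous_on {x..y} \<phi>" and "x \<le> y"
  shows "\<exists>s\<in>{x..y}. F (\<phi> y) - F (\<phi> x) = f (\<phi> s) * (\<phi> y - \<phi> x)"
proof -
  consider "\<phi> x = \<phi> y" | "\<phi> x < \<phi> y" | "\<phi> y < \<phi> x" by linarith
  then show ?thesis
  proof cases
    case 1
    then show ?thesis using \<open>x \<le> y\<close> by (intro bexI[of _ x]) auto
  next
    case 2
    obtain z where z: "\<phi> x < z" "z < \<phi> y" "F (\<phi> y) - F (\<phi> x) = (\<phi> y - \<phi> x) * f z"
      using MVT2[OF 2, of F f] F by blast
    obtain s where "x \<le> s" "s \<le> y" "\<phi> s = z"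
      using IVT'[of \<phi> x z y, OF _ _ \<open>x \<le> y\<close> \<phi>] z by auto
    then show ?thesis using z by (intro bexI[of _ s]) auto
  next
    case 3
    obtain z where z: "\<phi> y < z" "z < \<phi> x" "F (\<phi> x) - F (\<phi> y) = (\<phi> x - \<phi> y) * f z"
      using MVT2[OF 3, of F f] F by blast
    obtain s where "x \<le> s" "s \<le> y" "\<phi> s = z"
      using IVT2'[of \<phi> y z x, OF _ _ \<open>x \<le> y\<close> \<phi>] z by auto
    then show ?thesis using z by (intro bexI[of _ s]) (auto simp: algebra_simps)
  qed
qed

lemma last_level_crossing:
  fixes f :: "real \<Rightarrow> real"
  assumes f: "continuous_on {u..v} f" and "u \<le> v" "f u \<le> c" "c < f v"
  obtains a where "a \<in> {u..v}" "f a = c" "\<And>t. t \<in> {a<..v} \<Longrightarrow> c < f t"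
proof -
  define S where "S = {u..v} \<inter> f -` {c}"
  have "closed S"
    unfolding S_def by (rule continuous_closed_preimage[OF f]) auto
  then have "compact S"
    unfolding S_def by (meson bounded_Int bounded_closed_interval compact_eq_bounded_closed)
  moreover obtain x where "x \<in> {u..v}" "f x = c"
    using IVT'[of f u c v] assms by auto
  then have "S \<noteq> {}"
    by (auto simp: S_def)
  ultimately obtain a where a: "a \<in> S" and max: "\<And>y. y \<in> S \<Longrightarrow> y \<le> a"
    using compact_attains_sup by metis
  have "c < f t" if t: "t \<in> {a<..v}" for t
  proof (rule ccontr)
    assume "\<not> c < f t"
    moreover have "continuous_on {t..v} f"
      using a t by (intro continuous_on_subset[OF f]) (auto simp: S_def)
    ultimately obtain y where "t \<le> y" "y \<le> v" "f y = c"
      using IVT'[of f t c v] assms t by auto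
    then show False
      using max[of y] a t by (auto simp: S_def)
  qed
  then show ?thesis
    using that a by (auto simp: S_def)
qed

lemma first_level_crossing:
  fixes f :: "real \<Rightarrow> real"
  assumes f: "continuous_on {u..v} f" and "u \<le> v" "c < f u" "f v \<le> c"
  obtains b where "b \<in> {u..v}" "f b = c" "\<And>t. t \<in> {u..<b} \<Longrightarrow> c < f t"
proof -
  define S where "S = {u..v} \<inter> f -` {c}"
  have "closed S"
    unfolding S_def by (rule continuous_closed_preimage[OF f]) auto
  then have "compact S"
    unfolding S_def by (meson bounded_Int bounded_closed_interval compact_eq_bounded_closed)
  moreover obtain x where "x \<in> {u..v}" "f x = c"
    using IVT2'[of f v c u] assms by auto
  then have "S \<noteq> {}"
    by (auto simp: S_def)
  ultimately obtain b where b: "b \<in> S" and min: "\<And>y. y \<in> S \<Longrightarrow> b \<le> y"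
    using compact_attains_inf by metis
  have "c < f t" if t: "t \<in> {u..<b}" for t
  proof (rule ccontr)
    assume "\<not> c < f t"
    moreover have "continuous_on {u..t} f"
      using b t by (intro continuous_on_subset[OF f]) (auto simp: S_def)
    ultimately obtain y where "u \<le> y" "y \<le> t" "f y = c"
      using IVT2'[of f t c u] assms t by auto
    then show False
      using min[of y] b t by (auto simp: S_def)
  qed
  then show ?thesis
    using that b by (auto simp: S_def)
qed

lemma abs_diff_le_if_local_bound:
  fixes \<Phi> G :: "real \<Rightarrow> real"
  assumes "0 < d" "u \<le> v"
    and local: "\<And>x y. u \<le> x \<Longrightarrow> x \<le> y \<Longrightarrow> y \<le> v \<Longrightarrow> y - x < d \<Longrightarrow> \<bar>\<Phi> y - \<Phi> x\<bar> \<le> G y - G x"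
  shows "\<bar>\<Phi> v - \<Phi> u\<bar> \<le> G v - G u"
proof -
  have "\<forall>x. u \<le> x \<and> x \<le> v \<and> x - u \<le> real n * (d/2) \<longrightarrow> \<bar>\<Phi> x - \<Phi> u\<bar> \<le> G x - G u" for n
  proof (induction n)
    case 0
    then show ?case by auto
  next
    case (Suc n)
    show ?case
    proof (intro allI impI)
      fix x assume x: "u \<le> x \<and> x \<le> v \<and> x - u \<le> real (Suc n) * (d/2)"
      define x' where "x' = max u (x - d/2)"
      have x': "u \<le> x'" "x' \<le> x" "x - x' < d" "x' - u \<le> real n * (d/2)"
        using x \<open>0 < d\<close> by (auto simp: x'_def algebra_simps max_def)
      then have "\<bar>\<Phi> x' - \<Phi> u\<bar> \<le> G x' - G u"
        using Suc.IH x by auto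
      moreover have "\<bar>\<Phi> x - \<Phi> x'\<bar> \<le> G x - G x'"
        using local x' x by auto
      ultimately show "\<bar>\<Phi> x - \<Phi> u\<bar> \<le> G x - G u"
        by linarith
    qed
  qed
  moreover obtain n where "(v - u) / (d/2) \<le> real n"
    using real_arch_simple by blast
  ultimately show ?thesis
    using assms by (auto simp: field_simps)
qed

lemma continuous_on_primitive:
  fixes \<phi> g :: "real \<Rightarrow> real"
  assumes g: "g integrable_on {u..v}" and \<phi>: "\<And>x. x \<in> {u..v} \<Longrightarrow> \<phi> x = \<phi> u + integral {u..x} g"
  shows "continuous_on {u..v} \<phi>"
proof (rule continuous_on_eq)
  show "continuous_on {u..v} (\<lambda>x. \<phi> u + integral {u..x} g)"
    by (intro continuous_intros indefinite_integral_continuous_1 g)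
  show "\<phi> u + integral {u..x} g = \<phi> x" if "x \<in> {u..v}" for x
    using \<phi>[OF that] by simp
qed

lemma absolutely_integrable_continuous_mult:
  fixes g h :: "real \<Rightarrow> real"
  assumes h: "continuous_on {a..b} h" and g: "g absolutely_integrable_on {a..b}"
  shows "(\<lambda>t. h t * g t) absolutely_integrable_on {a..b}"
proof (rule absolutely_integrable_bounded_measurable_product_real)
  show "h \<in> borel_measurable (lebesgue_on {a..b})"
    by (rule continuous_imp_measurable_on_sets_lebesgue[OF h]) auto
  show "bounded (h ` {a..b})"
    using compact_continuous_image[OF h] compact_imp_bounded by auto
qed (use g in auto)

lemma integral_eq_0_if_square_integral_nonpos:
  fixes g :: "real \<Rightarrow> real"
  assumes g: "g integrable_on {a..b}" and g2: "(\<lambda>t. (g t)\<^sup>2) integrable_on {a..b}"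
    and le0: "integral {a..b} (\<lambda>t. (g t)\<^sup>2) \<le> 0" and "a \<le> b"
  shows "integral {a..b} g = 0"
proof -
  have bound: "\<bar>integral {a..b} g\<bar> \<le> 0 + (b - a) / (2 * l)" if "0 < l" for l
  proof -
    have l2: "(\<lambda>t. l / 2 * (g t)\<^sup>2) integrable_on {a..b}"
      using integrable_on_cmult_left[OF g2] by simp
    then have "(\<lambda>t. l / 2 * (g t)\<^sup>2 + 1 / (2 * l)) integrable_on {a..b}"
      by (intro integrable_add integrable_const_ivl)
    moreover have "\<bar>g t\<bar> \<le> l / 2 * (g t)\<^sup>2 + 1 / (2 * l)" for t
    proof -
      have "2 * (l * \<bar>g t\<bar>) * 1 \<le> (l * \<bar>g t\<bar>)\<^sup>2 + 1\<^sup>2"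
        by (rule sum_squares_bound)
      then show ?thesis
        using \<open>0 < l\<close> by (simp add: field_simps power2_eq_square)
    qed
    ultimately have "\<bar>integral {a..b} g\<bar> \<le> integral {a..b} (\<lambda>t. l / 2 * (g t)\<^sup>2 + 1 / (2 * l))"
      using integral_norm_bound_integral[OF g] by simp
    also have "\<dots> = l / 2 * integral {a..b} (\<lambda>t. (g t)\<^sup>2) + (b - a) / (2 * l)"
      using integral_add[OF l2 integrable_const_ivl] \<open>a \<le> b\<close> by simp
    also have "\<dots> \<le> 0 + (b - a) / (2 * l)"
      using le0 \<open>0 < l\<close> by (simp add: mult_nonneg_nonpos)
    finally show ?thesis .
  qed
  have "\<bar>integral {a..b} g\<bar> \<le> 0"
  proof (rule field_le_epsilon)
    fix e :: real assume "0 < e"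
    define l where "l = (b - a + 1) / (2 * e)"
    have "0 < l"
      using \<open>0 < e\<close> \<open>a \<le> b\<close> by (simp add: l_def)
    moreover have "(b - a) / (2 * l) \<le> e"
      using \<open>0 < e\<close> \<open>a \<le> b\<close> by (simp add: l_def field_simps)
    ultimately show "\<bar>integral {a..b} g\<bar> \<le> 0 + e"
      using bound[of l] by linarith
  qed
  then show ?thesis
    by simp
qed

lemma smallo_power_if_square_le_exp:
  fixes f :: "real \<Rightarrow> real"
  assumes bound: "\<forall>\<^sub>F \<beta> in at_right 0. (f \<beta>)\<^sup>2 \<le> C * exp (-1/\<beta>)"
  shows "f \<in> o[at_right 0](\<lambda>\<beta>. \<beta> ^ n)"
proof (rule landau_o.smallI)
  fix e :: real assume "0 < e"
  define K where "K = e\<^sup>2 / (\<bar>C\<bar> + 1)"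
  have "(\<lambda>\<beta>::real. exp (-1/\<beta>)) \<in> o[at_right 0](\<lambda>\<beta>. \<beta> ^ (2 * n))"
    by real_asymp
  moreover have "0 < K"
    using \<open>0 < e\<close> by (simp add: K_def)
  ultimately have "\<forall>\<^sub>F \<beta> in at_right (0::real). norm (exp (-1/\<beta>)) \<le> K * norm (\<beta> ^ (2 * n))"
    by (rule landau_o.smallD)
  then show "\<forall>\<^sub>F \<beta> in at_right 0. norm (f \<beta>) \<le> e * norm (\<beta> ^ n)"
    using bound eventually_at_right_less[of 0]
  proof eventually_elim
    case (elim \<beta>)
    have "(f \<beta>)\<^sup>2 \<le> \<bar>C\<bar> * exp (-1/\<beta>)"
      using elim(2) by (smt (verit) exp_gt_zero mult_right_mono abs_ge_self)
    also have "\<dots> \<le> \<bar>C\<bar> * (K * \<beta> ^ (2 * n))"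
      using elim(1,3) by (intro mult_left_mono) auto
    also have "\<dots> \<le> (e * \<beta> ^ n)\<^sup>2"
      using elim(3) \<open>0 < e\<close>
      by (simp add: K_def power_mult power_mult_distrib field_simps mult_left_le)
    finally show ?case
      using elim(3) \<open>0 < e\<close> by (simp add: abs_le_square_iff[symmetric] abs_mult)
  qed
qed

section \<open>A primitive of the absolute value of the sine\<close>

definition W :: "real \<Rightarrow> real" where
  "W y = (LBINT t=0..y. \<bar>sin t\<bar>)"

lemma W_0 [simp]: "W 0 = 0"
  by (simp add: W_def zero_ereal_def[symmetric])

lemma has_real_derivative_W: "(W has_real_derivative \<bar>sin y\<bar>) (at y)"
proof -
  have "continuous_on {-\<bar>y\<bar>-1..\<bar>y\<bar>+1} (\<lambda>t. \<bar>sin t\<bar>)"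
    by (auto intro!: continuous_intros)
  from interval_integral_FTC2[of "-\<bar>y\<bar>-1" 0 "\<bar>y\<bar>+1" "\<lambda>t. \<bar>sin t\<bar>" y, OF _ _ this]
  have "(W has_vector_derivative \<bar>sin y\<bar>) (at y within {-\<bar>y\<bar>-1..\<bar>y\<bar>+1})"
    unfolding W_def zero_ereal_def by simp
  then have "(W has_vector_derivative \<bar>sin y\<bar>) (at y)"
    by (subst (asm) at_within_interior) auto
  then show ?thesis
    by (simp add: has_real_derivative_iff_has_vector_derivative)
qed

lemma continuous_on_W: "continuous_on S W"
  using has_real_derivative_W DERIV_isCont continuous_at_imp_continuous_on by blast

lemma W_mono: "x \<le> y \<Longrightarrow> W x \<le> W y"
  by (rule deriv_nonneg_imp_mono[OF has_real_derivative_W]) auto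

lemma W_eq_1_minus_cos:
  assumes "0 \<le> y" "y \<le> pi"
  shows "W y = 1 - cos y"
proof -
  have "(\<lambda>x. W x - (1 - cos x)) y = (\<lambda>x. W x - (1 - cos x)) 0"
  proof (cases "y = 0")
    case False
    with assms have "0 < y" by simp
    then show ?thesis
    proof (rule DERIV_isconst_end)
      show "continuous_on {0..y} (\<lambda>x. W x - (1 - cos x))"
        by (intro continuous_intros continuous_on_W)
      fix x assume x: "0 < x" "x < y"
      then have "0 \<le> sin x"
        using assms by (intro sin_ge_zero) auto
      moreover have "((\<lambda>x. W x - (1 - cos x)) has_real_derivative \<bar>sin x\<bar> - (0 - - sin x)) (at x)"
        by (intro derivative_intros has_real_derivative_W DERIV_cos)
      ultimately show "((\<lambda>x. W x - (1 - cos x)) has_real_derivative 0) (at x)"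
        by simp
    qed
  qed simp
  then show ?thesis by simp
qed

lemma W_add_pi: "W (y + pi) = W y + 2"
proof -
  have "((\<lambda>y. W (y + pi) - W y) has_real_derivative 0) (at x)" for x
  proof -
    have "((\<lambda>y. W (y + pi) - W y) has_real_derivative \<bar>sin (x + pi)\<bar> * 1 - \<bar>sin x\<bar>) (at x)"
      by (auto intro!: derivative_eq_intros DERIV_chain2[OF has_real_derivative_W] has_real_derivative_W)
    then show ?thesis by simp
  qed
  then have "W (y + pi) - W y = W (0 + pi) - W 0"
    by (intro DERIV_isconst_all) blast
  then show ?thesis
    by (simp add: W_eq_1_minus_cos)
qed

section \<open>Weak derivatives\<close>

lemma set_integrable_if_square_integrable:
  fixes g :: "real \<Rightarrow> real"
  assumes g: "g \<in> borel_measurable lborel"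
    and g2: "set_integrable lborel {a..b} (\<lambda>t. (g t)\<^sup>2)"
  shows "set_integrable lborel {a..b} g"
proof (rule set_integrable_bound)
  have "set_integrable lborel {a..b} (\<lambda>t. 1::real)"
    unfolding set_integrable_def by (rule borel_integrable_compact) auto
  then show "set_integrable lborel {a..b} (\<lambda>t. 1 + (g t)\<^sup>2)"
    using g2 by (rule set_integral_add)
  show "set_borel_measurable lborel {a..b} g"
    using g by (simp add: set_borel_measurable_def measurable_lborel1)
  have "\<bar>y\<bar> \<le> 1 + y\<^sup>2" for y :: real
    using zero_le_power2[of "\<bar>y\<bar> - 1"] by (simp add: power2_eq_square algebra_simps)
  then show "AE x in lborel. x \<in> {a..b} \<longrightarrow> norm (g x) \<le> norm (1 + (g x)\<^sup>2)"
    by simp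
qed

lemma interval_integral_0_eq_integral:
  fixes g :: "real \<Rightarrow> real"
  assumes g: "set_integrable lborel {0..1} g" and x: "x \<in> {0..1}"
  shows "(LBINT t=0..x. g t) = integral {0..x} g"
proof -
  have "(LBINT t=0..x. g t) = (LBINT t=ereal 0..ereal x. g t)"
    by (simp only: zero_ereal_def)
  also have "\<dots> = (LBINT t:{0..x}. g t)"
    using x by (intro interval_integral_Icc) auto
  also have "\<dots> = integral {0..x} g"
  proof (rule set_borel_integral_eq_integral(2))
    show "set_integrable lborel {0..x} g"
      by (rule set_integrable_subset[OF g]) (use x in auto)
  qed
  finally show ?thesis .
qed

lemma weak_deriv_H1_iff:
  "weak_deriv_H1 \<phi> g \<longleftrightarrow>
     g \<in> borel_measurable lborel \<and> set_integrable lborel {0..1} (\<lambda>t. (g t)\<^sup>2) \<and>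
     (\<forall>x\<in>{0..1}. \<phi> x = \<phi> 0 + integral {0..x} g)"
proof -
  have "(\<forall>x\<in>{0..1}. \<phi> x = \<phi> 0 + (LBINT t=0..x. g t)) \<longleftrightarrow>
        (\<forall>x\<in>{0..1}. \<phi> x = \<phi> 0 + integral {0..x} g)"
    if "g \<in> borel_measurable lborel" "set_integrable lborel {0..1} (\<lambda>t. (g t)\<^sup>2)"
  proof (rule ball_cong[OF refl])
    fix x :: real assume "x \<in> {0..1}"
    from interval_integral_0_eq_integral[OF set_integrable_if_square_integrable[OF that] this]
    show "\<phi> x = \<phi> 0 + (LBINT t=0..x. g t) \<longleftrightarrow> \<phi> x = \<phi> 0 + integral {0..x} g"
      by (simp only:)
  qed
  then show ?thesis
    unfolding weak_deriv_H1_def by blast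
qed

context
  fixes \<phi> g :: "real \<Rightarrow> real"
  assumes weak_deriv: "weak_deriv_H1 \<phi> g"
begin

lemma weak_deriv_H1_set_integrable: "set_integrable lborel {0..1} g"
  using weak_deriv set_integrable_if_square_integrable unfolding weak_deriv_H1_def by blast

lemma weak_deriv_H1_absolutely_integrable:
  assumes "0 \<le> u" "v \<le> 1"
  shows "g absolutely_integrable_on {u..v}"
proof -
  have "g absolutely_integrable_on {0..1}"
    unfolding absolutely_integrable_on_def
    using set_borel_integral_eq_integral(1)[OF weak_deriv_H1_set_integrable]
      set_borel_integral_eq_integral(1)[OF set_integrable_abs[OF weak_deriv_H1_set_integrable]]
    by simp
  then show ?thesis
    by (rule absolutely_integrable_on_subinterval) (use assms in auto)
qed

lemma weak_deriv_H1_integrable_on: "0 \<le> u \<Longrightarrow> v \<le> 1 \<Longrightarrow> g integrable_on {u..v}"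
  using weak_deriv_H1_absolutely_integrable by (simp add: absolutely_integrable_on_def)

lemma weak_deriv_H1_square_integrable_on:
  assumes "0 \<le> u" "v \<le> 1"
  shows "(\<lambda>t. (g t)\<^sup>2) integrable_on {u..v}"
proof -
  have "(\<lambda>t. (g t)\<^sup>2) integrable_on {0..1}"
    using weak_deriv unfolding weak_deriv_H1_def by (blast intro: set_borel_integral_eq_integral(1))
  then show ?thesis
    by (rule integrable_on_subinterval) (use assms in auto)
qed

lemma weak_deriv_H1_eq_integral:
  assumes "0 \<le> u" "u \<le> x" "x \<le> 1"
  shows "\<phi> x = \<phi> u + integral {u..x} g"
proof -
  have "integral {0..u} g + integral {u..x} g = integral {0..x} g"
    using assms weak_deriv_H1_integrable_on[of 0 x] by (intro Henstock_Kurzweil_Integration.integral_combine) auto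
  moreover have "\<phi> y = \<phi> 0 + integral {0..y} g" if "y \<in> {0..1}" for y
    using weak_deriv that unfolding weak_deriv_H1_iff by blast
  ultimately show ?thesis
    using assms by (smt (verit) atLeastAtMost_iff)
qed

lemma weak_deriv_H1_continuous_on: "continuous_on {0..1} \<phi>"
  using weak_deriv_H1_integrable_on[of 0 1]
proof (rule continuous_on_primitive)
  show "\<phi> x = \<phi> 0 + integral {0..x} g" if "x \<in> {0..1}" for x
    using that by (intro weak_deriv_H1_eq_integral) auto
qed auto

end

lemma weak_deriv_H1_of_derivative:
  fixes f f' :: "real \<Rightarrow> real"
  assumes f: "\<And>x. (f has_real_derivative f' x) (at x)" and f': "continuous_on UNIV f'"
  shows "weak_deriv_H1 f f'"
  unfolding weak_deriv_H1_iff
proof (intro conjI ballI)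
  show "f' \<in> borel_measurable lborel"
    using borel_measurable_continuous_onI[OF f'] by (simp add: measurable_lborel1)
  show "set_integrable lborel {0..1} (\<lambda>t. (f' t)\<^sup>2)"
    unfolding set_integrable_def
    by (rule borel_integrable_compact) (auto intro!: continuous_intros continuous_on_subset[OF f'])
  fix x :: real assume "x \<in> {0..1}"
  have "(f' has_integral f x - f 0) {0..x}"
  proof (rule fundamental_theorem_of_calculus)
    show "(f has_vector_derivative f' y) (at y within {0..x})" for y
      using f[of y] by (simp add: has_real_derivative_iff_has_vector_derivative has_vector_derivative_at_within)
  qed (use \<open>x \<in> {0..1}\<close> in auto)
  then show "f x = f 0 + integral {0..x} f'"
    by (simp add: integral_unique)
qed

lemma chain_rule_increment_estimate:
  fixes F f \<phi> g :: "real \<Rightarrow> real"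
  assumes F: "\<And>y. (F has_real_derivative f y) (at y)"
    and \<phi>: "continuous_on {x..y} \<phi>" "\<phi> y - \<phi> x = integral {x..y} g"
    and g: "g absolutely_integrable_on {x..y}"
    and fg: "(\<lambda>t. f (\<phi> t) * g t) integrable_on {x..y}"
    and osc: "\<And>s t. s \<in> {x..y} \<Longrightarrow> t \<in> {x..y} \<Longrightarrow> \<bar>f (\<phi> s) - f (\<phi> t)\<bar> \<le> e"
    and "x \<le> y"
  shows "\<bar>F (\<phi> y) - F (\<phi> x) - integral {x..y} (\<lambda>t. f (\<phi> t) * g t)\<bar>
           \<le> e * integral {x..y} (\<lambda>t. \<bar>g t\<bar>)"
proof -
  obtain s where s: "s \<in> {x..y}" "F (\<phi> y) - F (\<phi> x) = f (\<phi> s) * (\<phi> y - \<phi> x)"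
    using MVT_along_continuous[OF F \<phi>(1) \<open>x \<le> y\<close>] by blast
  have gi: "g integrable_on {x..y}" and gabs: "(\<lambda>t. \<bar>g t\<bar>) integrable_on {x..y}"
    using g by (auto simp: absolutely_integrable_on_def)
  have fsg: "(\<lambda>t. f (\<phi> s) * g t) integrable_on {x..y}"
    using integrable_on_cmult_left[OF gi] by simp
  have "F (\<phi> y) - F (\<phi> x) - integral {x..y} (\<lambda>t. f (\<phi> t) * g t)
      = integral {x..y} (\<lambda>t. f (\<phi> s) * g t - f (\<phi> t) * g t)"
    using s(2) \<phi>(2) integral_diff[OF fsg fg] by simp
  also have "\<bar>\<dots>\<bar> \<le> integral {x..y} (\<lambda>t. e * \<bar>g t\<bar>)"
  proof (rule integral_norm_bound_integral[where f="\<lambda>t. f (\<phi> s) * g t - f (\<phi> t) * g t", simplified])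
    show "(\<lambda>t. f (\<phi> s) * g t - f (\<phi> t) * g t) integrable_on {x..y}"
      using fsg fg by (rule integrable_diff)
    show "(\<lambda>t. e * \<bar>g t\<bar>) integrable_on {x..y}"
      using integrable_on_cmult_left[OF gabs] by simp
    fix t assume "t \<in> {x..y}"
    then have "\<bar>f (\<phi> s) - f (\<phi> t)\<bar> * \<bar>g t\<bar> \<le> e * \<bar>g t\<bar>"
      using osc s(1) by (intro mult_right_mono) auto
    then show "\<bar>f (\<phi> s) * g t - f (\<phi> t) * g t\<bar> \<le> e * \<bar>g t\<bar>"
      by (simp add: abs_mult left_diff_distrib[symmetric])
  qed
  finally show ?thesis by simp
qed

lemma chain_rule_defect_le:
  fixes F f \<phi> g :: "real \<Rightarrow> real"
  assumes F: "\<And>y. (F has_real_derivative f y) (at y)" and f: "continuous_on UNIV f"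
    and g: "g absolutely_integrable_on {u..v}"
    and \<phi>: "\<And>x. x \<in> {u..v} \<Longrightarrow> \<phi> x = \<phi> u + integral {u..x} g"
    and "u \<le> v" "0 < e"
  shows "\<bar>F (\<phi> v) - F (\<phi> u) - integral {u..v} (\<lambda>t. f (\<phi> t) * g t)\<bar> \<le> e * integral {u..v} (\<lambda>t. \<bar>g t\<bar>)"
proof -
  have gi: "g integrable_on {u..v}" and gabs: "(\<lambda>t. \<bar>g t\<bar>) integrable_on {u..v}"
    using g by (auto simp: absolutely_integrable_on_def)
  have combine: "integral {u..y} h - integral {u..x} h = integral {x..y} h"
    if "h integrable_on {u..v}" "u \<le> x" "x \<le> y" "y \<le> v" for h :: "real \<Rightarrow> real" and x y
    using Henstock_Kurzweil_Integration.integral_combine[of u x y h]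
      integrable_on_subinterval[OF that(1), of u y] that by auto
  have \<phi>c: "continuous_on {u..v} \<phi>"
    using gi \<phi> by (rule continuous_on_primitive)
  have f\<phi>c: "continuous_on {u..v} (\<lambda>t. f (\<phi> t))"
    by (rule continuous_on_compose2[OF f \<phi>c]) auto
  have fgi: "(\<lambda>t. f (\<phi> t) * g t) integrable_on {u..v}"
    using absolutely_integrable_continuous_mult[OF f\<phi>c g] by (simp add: absolutely_integrable_on_def)
  have "uniformly_continuous_on {u..v} (\<lambda>t. f (\<phi> t))"
    by (rule compact_uniformly_continuous[OF f\<phi>c]) auto
  then obtain d where "0 < d" and d: "\<And>s t. s \<in> {u..v} \<Longrightarrow> t \<in> {u..v} \<Longrightarrow> dist s t < d \<Longrightarrow>
      dist (f (\<phi> s)) (f (\<phi> t)) < e"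
    unfolding uniformly_continuous_on_def using \<open>0 < e\<close> by metis
  define \<Phi> where "\<Phi> x = F (\<phi> x) - integral {u..x} (\<lambda>t. f (\<phi> t) * g t)" for x
  define G where "G x = e * integral {u..x} (\<lambda>t. \<bar>g t\<bar>)" for x
  have "\<bar>\<Phi> v - \<Phi> u\<bar> \<le> G v - G u"
  proof (rule abs_diff_le_if_local_bound[OF \<open>0 < d\<close> \<open>u \<le> v\<close>])
    fix x y assume xy: "u \<le> x" "x \<le> y" "y \<le> v" "y - x < d"
    have "\<phi> y - \<phi> x = integral {x..y} g"
      using \<phi>[of x] \<phi>[of y] combine[OF gi xy(1-3)] xy by simp
    moreover have "\<bar>f (\<phi> s) - f (\<phi> t)\<bar> \<le> e" if "s \<in> {x..y}" "t \<in> {x..y}" for s t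
      using d[of s t] that xy by (auto simp: dist_real_def abs_less_iff)
    ultimately have "\<bar>F (\<phi> y) - F (\<phi> x) - integral {x..y} (\<lambda>t. f (\<phi> t) * g t)\<bar>
        \<le> e * integral {x..y} (\<lambda>t. \<bar>g t\<bar>)"
      using xy by (intro chain_rule_increment_estimate[OF F continuous_on_subset[OF \<phi>c]]
          absolutely_integrable_on_subinterval[OF g] integrable_on_subinterval[OF fgi]) auto
    then show "\<bar>\<Phi> y - \<Phi> x\<bar> \<le> G y - G x"
      unfolding \<Phi>_def G_def using combine[OF fgi xy(1-3)] combine[OF gabs xy(1-3)]
      by (simp add: algebra_simps)
  qed
  then show ?thesis
    by (simp add: \<Phi>_def G_def)
qed

lemma has_integral_chain_rule:
  fixes F f \<phi> g :: "real \<Rightarrow> real"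
  assumes F: "\<And>y. (F has_real_derivative f y) (at y)" and f: "continuous_on UNIV f"
    and g: "g absolutely_integrable_on {u..v}"
    and \<phi>: "\<And>x. x \<in> {u..v} \<Longrightarrow> \<phi> x = \<phi> u + integral {u..x} g"
    and "u \<le> v"
  shows "((\<lambda>t. f (\<phi> t) * g t) has_integral F (\<phi> v) - F (\<phi> u)) {u..v}"
proof -
  have gi: "g integrable_on {u..v}" and gabs: "(\<lambda>t. \<bar>g t\<bar>) integrable_on {u..v}"
    using g by (auto simp: absolutely_integrable_on_def)
  have "continuous_on {u..v} (\<lambda>t. f (\<phi> t))"
    by (rule continuous_on_compose2[OF f continuous_on_primitive[OF gi \<phi>]]) auto
  then have fgi: "(\<lambda>t. f (\<phi> t) * g t) integrable_on {u..v}"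
    using absolutely_integrable_continuous_mult g by (simp add: absolutely_integrable_on_def)
  define G where "G = integral {u..v} (\<lambda>t. \<bar>g t\<bar>)"
  have "0 \<le> G"
    unfolding G_def by (rule integral_nonneg[OF gabs]) auto
  have "\<bar>F (\<phi> v) - F (\<phi> u) - integral {u..v} (\<lambda>t. f (\<phi> t) * g t)\<bar> \<le> 0"
  proof (rule field_le_epsilon)
    fix e :: real assume "0 < e"
    then have "\<bar>F (\<phi> v) - F (\<phi> u) - integral {u..v} (\<lambda>t. f (\<phi> t) * g t)\<bar> \<le> e / (G + 1) * G"
      using \<open>0 \<le> G\<close> unfolding G_def by (intro chain_rule_defect_le[OF F f g \<phi> \<open>u \<le> v\<close>]) auto
    also have "e / (G + 1) * G \<le> e"
      using \<open>0 < e\<close> \<open>0 \<le> G\<close> by (simp add: field_simps)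
    finally show "\<bar>F (\<phi> v) - F (\<phi> u) - integral {u..v} (\<lambda>t. f (\<phi> t) * g t)\<bar> \<le> 0 + e"
      by simp
  qed
  then show ?thesis
    using integrable_integral[OF fgi] by simp
qed

lemma weak_deriv_H1_flatten:
  fixes \<phi> g :: "real \<Rightarrow> real"
  assumes wd: "weak_deriv_H1 \<phi> g" and ab: "0 \<le> a" "a \<le> b" "b \<le> 1" and "\<phi> a = \<phi> b"
  shows "weak_deriv_H1 (\<lambda>y. if y \<in> {a<..<b} then \<phi> a else \<phi> y) (\<lambda>y. if y \<in> {a<..<b} then 0 else g y)"
    (is "weak_deriv_H1 ?\<psi> ?h")
  unfolding weak_deriv_H1_iff
proof (intro conjI ballI)
  have gm: "g \<in> borel_measurable lborel" and g2: "set_integrable lborel {0..1} (\<lambda>t. (g t)\<^sup>2)"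
    using wd unfolding weak_deriv_H1_def by blast+
  show hm: "?h \<in> borel_measurable lborel"
    by (rule measurable_If_set[OF _ gm]) auto
  show h2: "set_integrable lborel {0..1} (\<lambda>t. (?h t)\<^sup>2)"
  proof (rule set_integrable_bound[OF g2])
    show "set_borel_measurable lborel {0..1} (\<lambda>t. (?h t)\<^sup>2)"
      unfolding set_borel_measurable_def using hm by (simp add: measurable_lborel1)
  qed auto
  have hi: "?h integrable_on {0..1}"
    using set_borel_integral_eq_integral(1)[OF set_integrable_if_square_integrable[OF hm h2]] .
  have h_inside: "integral {c..d} ?h = 0" if "a \<le> c" "d \<le> b" for c d
  proof -
    have "integral {c..d} ?h = integral {c<..<d} (\<lambda>y. 0)"
      unfolding integral_open_interval_real using that by (intro integral_cong) auto
    then show ?thesis by simp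
  qed
  have h_outside: "integral {c..d} ?h = integral {c..d} g" if "d \<le> a \<or> b \<le> c" for c d
    using that by (intro integral_cong) auto
  have combine: "integral {0..y} ?h = integral {0..x} ?h + integral {x..y} ?h"
    if "0 \<le> x" "x \<le> y" "y \<le> 1" for x y
    using Henstock_Kurzweil_Integration.integral_combine[of 0 x y ?h]
      integrable_on_subinterval[OF hi, of 0 y] that by auto
  have \<phi>_eq: "\<phi> y = \<phi> x + integral {x..y} g" if "0 \<le> x" "x \<le> y" "y \<le> 1" for x y
    using weak_deriv_H1_eq_integral[OF wd that] .
  fix x :: real assume x: "x \<in> {0..1}"
  have \<psi>0: "?\<psi> 0 = \<phi> 0"
    using ab by simp
  consider "x \<le> a" | "a < x" "x < b" | "b \<le> x"
    by linarith
  then show "?\<psi> x = ?\<psi> 0 + integral {0..x} ?h"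
  proof cases
    case 1
    then show ?thesis
      using x \<phi>_eq[of 0 x] h_outside[of x 0] by (simp add: \<psi>0)
  next
    case 2
    then have "integral {0..x} ?h = integral {0..a} g"
      using combine[of a x] h_inside[of a x] h_outside[of a 0] ab by simp
    then show ?thesis
      using 2 \<phi>_eq[of 0 a] ab by (simp add: \<psi>0)
  next
    case 3
    then have "integral {0..x} ?h = integral {0..a} g + integral {b..x} g"
      using combine[of b x] combine[of a b] h_inside[of a b] h_outside[of a 0] h_outside[of x b] ab x
      by simp
    then show ?thesis
      using 3 x \<phi>_eq[of 0 a] \<phi>_eq[of b x] ab \<open>\<phi> a = \<phi> b\<close> by (simp add: \<psi>0)
  qed
qed

section \<open>The energy\<close>

definition energy_density :: "real \<Rightarrow> (real \<Rightarrow> real) \<Rightarrow> (real \<Rightarrow> real) \<Rightarrow> real \<Rightarrow> real" where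
  "energy_density \<beta> \<phi> g t = (g t)\<^sup>2 + (sin (\<phi> t))\<^sup>2 / \<beta>\<^sup>2"

lemma energy_density_integrable:
  assumes wd: "weak_deriv_H1 \<phi> g" and "0 \<le> u" "v \<le> 1"
  shows "energy_density \<beta> \<phi> g integrable_on {u..v}"
proof -
  have "continuous_on {u..v} \<phi>"
    using assms by (intro continuous_on_subset[OF weak_deriv_H1_continuous_on[OF wd]]) auto
  then have "(\<lambda>t. (sin (\<phi> t))\<^sup>2 / \<beta>\<^sup>2) integrable_on {u..v}"
    by (intro integrable_on_divide integrable_continuous_interval continuous_intros)
  then show ?thesis
    unfolding energy_density_def
    using assms by (intro integrable_add weak_deriv_H1_square_integrable_on[OF wd])
qed

lemma F_energy_eq:
  assumes wd: "weak_deriv_H1 \<phi> g"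
  shows "F_energy \<beta> \<kappa> \<phi> g = 1/8 * integral {0..1} (energy_density \<beta> \<phi> g) - \<kappa>/2 * (\<phi> 1 - \<phi> 0)"
proof -
  have "set_integrable lborel {0..1} (\<lambda>t. (sin (\<phi> t))\<^sup>2)"
    unfolding set_integrable_def
    by (rule borel_integrable_compact) (auto intro!: continuous_intros weak_deriv_H1_continuous_on[OF wd])
  then have "set_integrable lborel {0..1} (energy_density \<beta> \<phi> g)"
    using wd unfolding energy_density_def weak_deriv_H1_def
    by (intro set_integral_add(1) set_integrable_divide) auto
  then have "(LINT x:{0..1}|lborel. (g x)\<^sup>2 + (sin (\<phi> x))\<^sup>2 / \<beta>\<^sup>2) = integral {0..1} (energy_density \<beta> \<phi> g)"
    unfolding energy_density_def by (rule set_borel_integral_eq_integral(2))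
  moreover have "(LINT x:{0..1}|lborel. g x) = \<phi> 1 - \<phi> 0"
    using set_borel_integral_eq_integral(2)[OF weak_deriv_H1_set_integrable[OF wd]]
      weak_deriv_H1_eq_integral[OF wd, of 0 1] by simp
  ultimately show ?thesis
    unfolding F_energy_def by simp
qed

text \<open>By AM-GM the energy density dominates \<open>2 / \<beta> * \<bar>sin \<phi>\<bar> * \<bar>g\<bar>\<close>, whose integral is
  the variation of \<open>W \<circ> \<phi>\<close>.\<close>
lemma Modica_Mortola_bound:
  assumes wd: "weak_deriv_H1 \<phi> g" and "0 < \<beta>" and uv: "0 \<le> u" "u \<le> v" "v \<le> 1"
  shows "2 / \<beta> * \<bar>W (\<phi> v) - W (\<phi> u)\<bar> \<le> integral {u..v} (energy_density \<beta> \<phi> g)"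
proof -
  have "((\<lambda>t. \<bar>sin (\<phi> t)\<bar> * g t) has_integral W (\<phi> v) - W (\<phi> u)) {u..v}"
  proof (rule has_integral_chain_rule[OF has_real_derivative_W])
    show "continuous_on UNIV (\<lambda>y::real. \<bar>sin y\<bar>)"
      by (intro continuous_intros)
    show "g absolutely_integrable_on {u..v}"
      using uv by (intro weak_deriv_H1_absolutely_integrable[OF wd]) auto
    show "\<phi> x = \<phi> u + integral {u..x} g" if "x \<in> {u..v}" for x
      using that uv by (intro weak_deriv_H1_eq_integral[OF wd]) auto
  qed (use uv in auto)
  then have int: "((\<lambda>t. 2 / \<beta> * (\<bar>sin (\<phi> t)\<bar> * g t)) has_integral 2 / \<beta> * (W (\<phi> v) - W (\<phi> u))) {u..v}"
    by (rule has_integral_mult_right)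
  have "norm (integral {u..v} (\<lambda>t. 2 / \<beta> * (\<bar>sin (\<phi> t)\<bar> * g t)))
      \<le> integral {u..v} (energy_density \<beta> \<phi> g)"
  proof (rule integral_norm_bound_integral)
    show "(\<lambda>t. 2 / \<beta> * (\<bar>sin (\<phi> t)\<bar> * g t)) integrable_on {u..v}"
      using int by blast
    show "energy_density \<beta> \<phi> g integrable_on {u..v}"
      using uv by (intro energy_density_integrable[OF wd]) auto
    fix t
    have "2 * \<bar>g t\<bar> * (\<bar>sin (\<phi> t)\<bar> / \<beta>) \<le> \<bar>g t\<bar>\<^sup>2 + (\<bar>sin (\<phi> t)\<bar> / \<beta>)\<^sup>2"
      by (rule sum_squares_bound)
    then show "norm (2 / \<beta> * (\<bar>sin (\<phi> t)\<bar> * g t)) \<le> energy_density \<beta> \<phi> g t"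
      using \<open>0 < \<beta>\<close> by (simp add: energy_density_def abs_mult power_divide field_simps)
  qed
  moreover have "norm (2 / \<beta> * (W (\<phi> v) - W (\<phi> u))) = 2 / \<beta> * \<bar>W (\<phi> v) - W (\<phi> u)\<bar>"
    using \<open>0 < \<beta>\<close> by (simp only: real_norm_def abs_mult abs_of_pos[of "2 / \<beta>"] divide_pos_pos zero_less_numeral)
  ultimately show ?thesis
    unfolding integral_unique[OF int] by simp
qed

lemma energy_flatten_le:
  assumes wd: "weak_deriv_H1 \<phi> g" and ab: "0 \<le> a" "a \<le> b" "b \<le> 1" and "\<phi> a = \<phi> b"
    and above: "\<And>t. t \<in> {a..b} \<Longrightarrow> (sin (\<phi> a))\<^sup>2 \<le> (sin (\<phi> t))\<^sup>2"
  shows "integral {0..1} (energy_density \<beta> (\<lambda>y. if y \<in> {a<..<b} then \<phi> a else \<phi> y)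
                                         (\<lambda>y. if y \<in> {a<..<b} then 0 else g y))
    \<le> integral {0..1} (energy_density \<beta> \<phi> g) - integral {a..b} (\<lambda>t. (g t)\<^sup>2)"
    (is "integral {0..1} (energy_density \<beta> ?\<psi> ?h) \<le> _")
proof -
  define D where "D t = energy_density \<beta> ?\<psi> ?h t - energy_density \<beta> \<phi> g t" for t
  have wd': "weak_deriv_H1 ?\<psi> ?h"
    by (rule weak_deriv_H1_flatten[OF wd ab \<open>\<phi> a = \<phi> b\<close>])
  have "integral {0..1} (energy_density \<beta> ?\<psi> ?h) - integral {0..1} (energy_density \<beta> \<phi> g)
      = integral {0..1} D"
    unfolding D_def
    using integral_diff[OF energy_density_integrable[OF wd'] energy_density_integrable[OF wd]] by simp
  also have "\<dots> = integral {0..1} (\<lambda>t. if t \<in> {a<..<b} then D t else 0)"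
    by (intro integral_cong) (auto simp: D_def energy_density_def)
  also have "\<dots> = integral {a<..<b} D"
  proof -
    have "{a<..<b} \<inter> {0..1} = {a<..<b}"
      using ab by auto
    then show ?thesis
      by (simp only: integral_restrict_Int)
  qed
  also have "\<dots> \<le> integral {a<..<b} (\<lambda>t. - (g t)\<^sup>2)"
  proof (rule integral_le)
    show "D integrable_on {a<..<b}"
      unfolding integrable_on_open_interval_real D_def using ab
      by (intro integrable_diff energy_density_integrable[OF wd'] energy_density_integrable[OF wd])
    show "(\<lambda>t. - (g t)\<^sup>2) integrable_on {a<..<b}"
      unfolding integrable_on_open_interval_real
      using ab by (intro integrable_neg weak_deriv_H1_square_integrable_on[OF wd])
    fix t assume "t \<in> {a<..<b}"
    then have "(sin (\<phi> a))\<^sup>2 / \<beta>\<^sup>2 \<le> (sin (\<phi> t))\<^sup>2 / \<beta>\<^sup>2"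
      using above by (intro divide_right_mono) auto
    then show "D t \<le> - (g t)\<^sup>2"
      using \<open>t \<in> {a<..<b}\<close> by (simp add: D_def energy_density_def)
  qed
  also have "\<dots> = - integral {a..b} (\<lambda>t. (g t)\<^sup>2)"
    by (simp add: integral_open_interval_real)
  finally show ?thesis
    by simp
qed

lemma kink_has_real_derivative:
  fixes \<beta> t :: real
  assumes "0 < \<beta>"
  defines "u \<equiv> \<lambda>x. 2 * arctan (t * exp ((x - 1) / \<beta>))"
  shows "(u has_real_derivative sin (u x) / \<beta>) (at x)"
proof -
  define z where "z = t * exp ((x - 1) / \<beta>)"
  have "(u has_real_derivative 2 * (inverse (1 + z\<^sup>2) * (t * (exp ((x - 1) / \<beta>) * (1 / \<beta>))))) (at x)"
    unfolding u_def z_def using assms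
    by (auto intro!: derivative_eq_intros DERIV_arctan[THEN DERIV_chain2] simp: field_simps)
  moreover have "2 * (inverse (1 + z\<^sup>2) * (t * (exp ((x - 1) / \<beta>) * (1 / \<beta>)))) = sin (u x) / \<beta>"
    unfolding u_def sin_two_arctan z_def[symmetric] using assms by (simp add: z_def field_simps)
  ultimately show ?thesis
    by (simp only:)
qed

lemma shifted_kink:
  fixes u :: "real \<Rightarrow> real"
  assumes "0 < \<beta>" and u': "\<And>x. (u has_real_derivative sin (u x) / \<beta>) (at x)"
    and "mono u" "0 \<le> u 0" "u 1 \<le> pi / 2"
  shows "weak_deriv_H1 (\<lambda>x. u x - u 0) (\<lambda>x. sin (u x) / \<beta>)"
    and "integral {0..1} (energy_density \<beta> (\<lambda>x. u x - u 0) (\<lambda>x. sin (u x) / \<beta>))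
           \<le> 2 / \<beta> * (W (u 1) - W (u 0))"
proof -
  have "continuous_on UNIV u"
    using u' by (meson DERIV_isCont continuous_at_imp_continuous_on)
  then have "continuous_on UNIV (\<lambda>x. sin (u x) / \<beta>)"
    using \<open>0 < \<beta>\<close> by (intro continuous_intros) auto
  then show wd: "weak_deriv_H1 (\<lambda>x. u x - u 0) (\<lambda>x. sin (u x) / \<beta>)"
    by (intro weak_deriv_H1_of_derivative) (auto intro!: derivative_eq_intros u')
  have "((\<lambda>x. 2 / \<beta> * (\<bar>sin (u x)\<bar> * (sin (u x) / \<beta>))) has_integral 2 / \<beta> * (W (u 1) - W (u 0))) {0..1}"
  proof (intro has_integral_mult_right fundamental_theorem_of_calculus)
    show "((\<lambda>x. W (u x)) has_vector_derivative \<bar>sin (u x)\<bar> * (sin (u x) / \<beta>)) (at x within {0..1})" for x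
      using DERIV_chain2[OF has_real_derivative_W u']
      by (simp add: has_real_derivative_iff_has_vector_derivative has_vector_derivative_at_within)
  qed simp
  moreover have "energy_density \<beta> (\<lambda>x. u x - u 0) (\<lambda>x. sin (u x) / \<beta>) x
      \<le> 2 / \<beta> * (\<bar>sin (u x)\<bar> * (sin (u x) / \<beta>))" if "x \<in> {0..1}" for x
  proof -
    have "u 0 \<le> u x" "u x \<le> u 1"
      using \<open>mono u\<close> that by (auto dest: monoD)
    then have "0 \<le> sin (u x - u 0)" "sin (u x - u 0) \<le> sin (u x)"
      using assms(4,5) by (auto intro: sin_ge_zero simp: sin_mono_le_eq)
    then have "sin (u x - u 0) * sin (u x - u 0) \<le> sin (u x) * sin (u x)"
      by (intro mult_mono) auto
    then show ?thesis
      using \<open>0 < \<beta>\<close> \<open>0 \<le> sin (u x - u 0)\<close> \<open>sin (u x - u 0) \<le> sin (u x)\<close>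
      by (simp add: energy_density_def power2_eq_square field_simps)
  qed
  ultimately show "integral {0..1} (energy_density \<beta> (\<lambda>x. u x - u 0) (\<lambda>x. sin (u x) / \<beta>))
      \<le> 2 / \<beta> * (W (u 1) - W (u 0))"
    using has_integral_le[OF integrable_integral[OF energy_density_integrable[OF wd]]] by force
qed

section \<open>The tilted potential\<close>

text \<open>The bound \<open>s < 2 / pi\<close> (that is, \<open>\<kappa> \<beta> < 1 / pi\<close>) makes \<open>V (y + pi) > V y\<close>, so that
  \<open>arcsin s\<close> minimizes \<open>V\<close> on \<open>[0, \<infinity>)\<close>.\<close>
locale tilted_potential =
  fixes s :: real
  assumes s_pos: "0 < s" and s_less: "s < 2 / pi"
begin

definition V :: "real \<Rightarrow> real" where
  "V y = W y - s * y"

lemma s_less_1: "s < 1"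
proof -
  have "2 / pi < 1"
    using pi_gt3 by (simp add: divide_less_eq)
  then show ?thesis
    using s_less by linarith
qed

lemma sin_arcsin_s [simp]: "sin (arcsin s) = s"
  using s_pos s_less_1 by simp

lemma arcsin_s_pos: "0 < arcsin s"
  using s_pos s_less_1 by (simp add: arcsin_less_mono[of 0 s, simplified])

lemma arcsin_s_less: "arcsin s < pi / 4"
proof -
  have "2 / pi < 2 / 3"
    using pi_gt3 by (simp add: field_simps)
  moreover have "(4/3)\<^sup>2 < (sqrt 2)\<^sup>2"
    by (simp add: power2_eq_square)
  then have "4/3 < sqrt 2"
    by (rule power_less_imp_less_base) simp
  ultimately have "s < sin (pi / 4)"
    using s_less by (simp add: sin_45)
  then show ?thesis
    using s_pos s_less_1 arcsin_less_mono[of s "sin (pi/4)"] sin_ge_zero[of "pi/4"]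
    by (simp add: arcsin_sin)
qed

lemma s_le_arcsin_s: "s \<le> arcsin s"
  using sin_x_le_x[of "arcsin s"] arcsin_s_pos by simp

lemma has_real_derivative_V: "(V has_real_derivative \<bar>sin y\<bar> - s) (at y)"
  unfolding V_def[abs_def] by (auto intro!: derivative_eq_intros has_real_derivative_W)

lemma V_add_pi: "V (y + pi) = V y + (2 - s * pi)"
  unfolding V_def W_add_pi by (simp add: algebra_simps)

lemma V_quadratic_growth:
  assumes y: "0 \<le> y" "y \<le> pi / 3"
  shows "V (arcsin s) + (y - arcsin s)\<^sup>2 / 4 \<le> V y"
proof -
  define A where "A = arcsin s"
  define Q where "Q y = V y - (y - A)\<^sup>2 / 4" for y
  have A: "0 < A" "A < pi / 4" "sin A = s"
    using arcsin_s_pos arcsin_s_less by (simp_all add: A_def)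
  have Q': "(Q has_real_derivative (sin w - w / 2) - (sin A - A / 2)) (at w)"
    if "0 \<le> w" "w \<le> pi / 3" for w
  proof -
    have "\<bar>sin w\<bar> = sin w"
      using sin_ge_zero[of w] that by simp
    then show ?thesis
      unfolding Q_def[abs_def]
      by (auto intro!: derivative_eq_intros has_real_derivative_V simp: A(3) field_simps)
  qed
  have inc: "sin x - x / 2 \<le> sin z - z / 2" if "0 \<le> x" "x \<le> z" "z \<le> pi / 3" for x z
  proof (rule deriv_nonneg_imp_mono[of x z "\<lambda>y. sin y - y / 2" "\<lambda>y. cos y - 1/2"])
    fix w assume "w \<in> {x..z}"
    then have "cos (pi / 3) \<le> cos w"
      using that by (intro cos_monotone_0_pi_le) auto
    then show "0 \<le> cos w - 1/2"
      by (simp add: cos_60)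
  qed (auto intro!: derivative_eq_intros simp: that)
  have "Q A \<le> Q y"
  proof (cases "A \<le> y")
    case True
    show ?thesis
    proof (rule deriv_nonneg_imp_mono[OF Q' _ True])
      show "0 \<le> (sin w - w / 2) - (sin A - A / 2)" if "w \<in> {A..y}" for w
        using inc[of A w] that A y by auto
    qed (use A y in auto)
  next
    case False
    show ?thesis
    proof (rule DERIV_nonpos_imp_nonincreasing[of y A Q])
      show "\<exists>d. (Q has_real_derivative d) (at w) \<and> d \<le> 0" if "y \<le> w" "w \<le> A" for w
        using Q'[of w] inc[of w A] that A y by auto
    qed (use False in auto)
  qed
  then show ?thesis
    by (simp add: Q_def A_def)
qed

lemma V_arcsin_s_le: "V (arcsin s) \<le> - s\<^sup>2 / 4"
proof -
  have "V (arcsin s) \<le> - (arcsin s)\<^sup>2 / 4"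
    using V_quadratic_growth[of 0] by (simp add: V_def[of 0])
  moreover have "s\<^sup>2 \<le> (arcsin s)\<^sup>2"
    using s_le_arcsin_s s_pos by (intro power_mono) auto
  ultimately show ?thesis
    by simp
qed

lemma V_lower_bound:
  assumes y: "0 \<le> y" "y \<le> pi"
  shows "V (arcsin s) + min ((y - arcsin s)\<^sup>2 / 4) (min (1/60) (2 - s * pi)) \<le> V y"
proof -
  define A where "A = arcsin s"
  have A: "0 < A" "A < pi / 4" "sin A = s"
    using arcsin_s_pos arcsin_s_less by (simp_all add: A_def)
  consider "y \<le> pi / 3" | "pi / 3 \<le> y" "y \<le> pi - A" | "pi - A \<le> y"
    by linarith
  then show ?thesis
  proof cases
    case 1
    then show ?thesis
      using V_quadratic_growth[of y] y by linarith
  next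
    case 2
    have "V (pi / 3) \<le> V y"
    proof (rule deriv_nonneg_imp_mono[OF has_real_derivative_V _ 2(1)])
      fix w assume w: "w \<in> {pi/3..y}"
      have "sin A \<le> sin (if w \<le> pi / 2 then w else pi - w)"
        using w 2 A by (subst sin_mono_le_eq) auto
      then show "0 \<le> \<bar>sin w\<bar> - s"
        using A(3) by (simp split: if_splits)
    qed
    moreover have "0.26 \<le> pi / 3 - A"
      using A pi_approx(1) by simp
    then have "1/60 \<le> (pi / 3 - A)\<^sup>2 / 4"
      using power_mono[of "0.26" "pi / 3 - A" 2] by (simp add: power2_eq_square)
    ultimately show ?thesis
      using V_quadratic_growth[of "pi / 3"] by (simp add: A_def)
  next
    case 3
    have "V pi \<le> V y"
    proof (rule DERIV_nonpos_imp_nonincreasing[OF y(2)])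
      fix w assume w: "y \<le> w" "w \<le> pi"
      have "sin (pi - w) \<le> sin A"
        using w 3 A by (subst sin_mono_le_eq) auto
      moreover have "0 \<le> sin w"
        using w 3 A by (intro sin_ge_zero) auto
      ultimately show "\<exists>d. (V has_real_derivative d) (at w) \<and> d \<le> 0"
        using has_real_derivative_V[of w] A(3) by auto
    qed
    moreover have "V pi = 2 - s * pi"
      by (simp add: V_def W_eq_1_minus_cos)
    moreover have "min ((y - A)\<^sup>2 / 4) (min (1/60) (2 - s * pi)) \<le> 2 - s * pi"
      by simp
    ultimately show ?thesis
      using V_arcsin_s_le zero_le_power2[of s] unfolding A_def by linarith
  qed
qed

lemma V_arcsin_s_le_V:
  assumes "0 \<le> y"
  shows "V (arcsin s) \<le> V y"
proof -
  have gap: "0 < 2 - s * pi"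
    using s_less pi_gt_zero by (simp add: field_simps)
  have "\<forall>y. 0 \<le> y \<and> y \<le> real n * pi \<longrightarrow> V (arcsin s) \<le> V y" for n
  proof (induction n)
    case 0
    have "V 0 = 0"
      by (simp add: V_def)
    then have "V (arcsin s) \<le> V 0"
      using V_arcsin_s_le zero_le_power2[of s] by linarith
    then show ?case
      by auto
  next
    case (Suc n)
    show ?case
    proof (intro allI impI)
      fix y assume y: "0 \<le> y \<and> y \<le> real (Suc n) * pi"
      show "V (arcsin s) \<le> V y"
      proof (cases "y \<le> pi")
        case True
        then show ?thesis
          using V_lower_bound[of y] y gap by (smt (verit) zero_le_divide_iff zero_le_power2)
      next
        case False
        then have "V (arcsin s) \<le> V (y - pi)"
          using Suc.IH y by (auto simp: algebra_simps)
        then show ?thesis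
          using V_add_pi[of "y - pi"] gap by simp
      qed
    qed
  qed
  moreover obtain n where "y / pi \<le> real n"
    using real_arch_simple by blast
  ultimately show ?thesis
    using assms by (auto simp: field_simps)
qed

lemma almost_minimal_point:
  assumes a: "\<bar>W a\<bar> - s * a \<le> V (arcsin s) + e"
    and e: "e < s\<^sup>2 / 4" "e < 1/60" "e < 2 - s * pi"
  shows "0 \<le> a" "a \<le> pi / 3" "(a - arcsin s)\<^sup>2 \<le> 4 * e"
proof -
  show "0 \<le> a"
  proof (rule ccontr)
    assume "\<not> 0 \<le> a"
    then have "s * a \<le> 0"
      using s_pos by (simp add: mult_nonneg_nonpos)
    then have "0 \<le> \<bar>W a\<bar> - s * a"
      by simp
    then show False
      using a e V_arcsin_s_le by linarith
  qed
  then have Va: "V a \<le> V (arcsin s) + e"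
    using a W_mono[of 0 a] by (simp add: V_def)
  have "a \<le> pi"
  proof (rule ccontr)
    assume "\<not> a \<le> pi"
    then show False
      using V_add_pi[of "a - pi"] V_arcsin_s_le_V[of "a - pi"] Va e by simp
  qed
  then have "min ((a - arcsin s)\<^sup>2 / 4) (min (1/60) (2 - s * pi)) \<le> e"
    using V_lower_bound[OF \<open>0 \<le> a\<close>] Va by simp
  then show sq: "(a - arcsin s)\<^sup>2 \<le> 4 * e"
    using e by (simp add: min_def split: if_splits)
  show "a \<le> pi / 3"
  proof (rule ccontr)
    assume "\<not> a \<le> pi / 3"
    then have "0.26 \<le> a - arcsin s"
      using arcsin_s_less pi_approx(1) by simp
    then have "0.26\<^sup>2 \<le> (a - arcsin s)\<^sup>2"
      by (intro power_mono) auto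
    then show False
      using sq e by (simp add: power2_eq_square)
  qed
qed

lemma below_two_thirds_pi:
  assumes "\<bar>W y\<bar> + \<bar>W a - W y\<bar> - s * a \<le> V (arcsin s) + e"
    and a: "0 \<le> a" "a \<le> pi / 3" and "e < 2"
  shows "y < 2 * pi / 3"
proof (rule ccontr)
  assume "\<not> y < 2 * pi / 3"
  then have "W (2 * pi / 3) \<le> W y"
    by (intro W_mono) simp
  moreover have "W (2 * pi / 3) = 3 / 2"
  proof -
    have "cos (2 * pi / 3) = cos (pi - pi / 3)"
      by simp
    also have "\<dots> = - 1 / 2"
      by (simp only: cos_pi_minus cos_60)
    finally show ?thesis
      by (subst W_eq_1_minus_cos) auto
  qed
  moreover have "W a \<le> 1 / 2"
    using W_mono[OF a(2)] by (simp add: W_eq_1_minus_cos cos_60)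
  moreover have "V (arcsin s) \<le> W a - s * a"
    using V_arcsin_s_le_V[OF a(1)] by (simp add: V_def)
  moreover have "0 \<le> W a"
    using W_mono[OF a(1)] by simp
  ultimately show False
    using assms by linarith
qed

lemma arcsin_s_minus_s_le: "arcsin s - s \<le> 4 * s ^ 3 / 3"
proof -
  define A where "A = arcsin s"
  have A: "0 < A" "A < 1" "sin A = s"
    using arcsin_s_pos arcsin_s_less pi_less_4 by (simp_all add: A_def)
  have diff: "A - s \<le> A ^ 3 / 6"
    using x_minus_sin_le[of A] A by simp
  moreover have "A ^ 3 \<le> A"
    using A power_le_one[of A 2] mult_left_mono[of "A\<^sup>2" 1 A]
    by (simp add: power3_eq_cube power2_eq_square)
  ultimately have "A ^ 3 \<le> (2 * s) ^ 3"
    using A by (intro power_mono) auto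
  then show ?thesis
    using diff by (simp add: A_def power_mult_distrib)
qed

lemma abs_diff_s_le_if_close_to_arcsin_s:
  assumes close: "(y - arcsin s)\<^sup>2 \<le> 8 * s\<^sup>2 * \<eta>"
    and "\<eta> \<le> e\<^sup>2 / 128" "s\<^sup>2 \<le> 3 * e / 16" "0 < e"
  shows "\<bar>y - s\<bar> \<le> e * s / 2"
proof -
  have "(y - arcsin s)\<^sup>2 \<le> 8 * s\<^sup>2 * (e\<^sup>2 / 128)"
    using close \<open>\<eta> \<le> e\<^sup>2 / 128\<close> by (smt (verit) mult_left_mono zero_le_power2)
  also have "\<dots> = (e * s / 4)\<^sup>2"
    by (simp add: power2_eq_square)
  finally have y: "\<bar>y - arcsin s\<bar> \<le> e * s / 4"
    using \<open>0 < e\<close> s_pos by (simp add: abs_le_square_iff[symmetric])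
  have "arcsin s - s \<le> 4 * s ^ 3 / 3"
    by (rule arcsin_s_minus_s_le)
  also have "\<dots> = 4 / 3 * s * s\<^sup>2"
    by (simp add: power3_eq_cube power2_eq_square)
  also have "\<dots> \<le> 4 / 3 * s * (3 * e / 16)"
    using s_pos \<open>s\<^sup>2 \<le> 3 * e / 16\<close> by (intro mult_left_mono) auto
  finally have "arcsin s - s \<le> e * s / 4"
    by simp
  then show ?thesis
    using y[unfolded abs_le_iff] s_le_arcsin_s unfolding abs_le_iff by linarith
qed

text \<open>The competitor is the kink \<open>u\<close> solving \<open>\<beta> u' = sin u\<close> with \<open>u 1 = arcsin s\<close>, which
  turns the Modica--Mortola inequality into an equality, shifted down by \<open>u 0 = O(exp (-1/\<beta>))\<close>
  to satisfy the boundary condition.\<close>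
lemma competitor:
  assumes "0 < \<beta>"
  obtains \<psi> h where "\<psi> \<in> J_set" "weak_deriv_H1 \<psi> h" "arcsin s - 2 * s * exp (-1/\<beta>) \<le> \<psi> 1"
    "integral {0..1} (energy_density \<beta> \<psi> h) \<le> 2 / \<beta> * (1 - cos (arcsin s))"
proof -
  define A where "A = arcsin s"
  have A: "0 < A" "A < pi / 4" "sin A = s"
    using arcsin_s_pos arcsin_s_less by (simp_all add: A_def)
  define t where "t = tan (A / 2)"
  have "0 \<le> t"
    unfolding t_def using A by (intro less_imp_le[OF tan_gt_zero]) auto
  have "t \<le> s"
    unfolding t_def using tan_half_le_sin[of A] A by simp
  define u where "u x = 2 * arctan (t * exp ((x - 1) / \<beta>))" for x
  have u': "(u has_real_derivative sin (u x) / \<beta>) (at x)" for x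
    unfolding u_def[abs_def] using kink_has_real_derivative[OF \<open>0 < \<beta>\<close>] by (simp add: u_def)
  have u1: "u 1 = A"
    using arctan_tan[of "A / 2"] A by (simp add: u_def t_def)
  have "mono u"
    unfolding u_def using \<open>0 < \<beta>\<close> \<open>0 \<le> t\<close>
    by (auto intro!: monoI arctan_monotone' mult_left_mono simp: divide_right_mono)
  have u0: "0 \<le> u 0" "u 0 \<le> 2 * s * exp (-1/\<beta>)"
  proof -
    show "0 \<le> u 0"
      using \<open>0 \<le> t\<close> by (simp add: u_def)
    have "u 0 \<le> 2 * (t * exp ((0 - 1) / \<beta>))"
      unfolding u_def using \<open>0 \<le> t\<close> by (intro mult_left_mono arctan_le_self) auto
    also have "\<dots> \<le> 2 * (s * exp ((0 - 1) / \<beta>))"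
      using \<open>t \<le> s\<close> by (intro mult_left_mono mult_right_mono) auto
    finally show "u 0 \<le> 2 * s * exp (-1/\<beta>)"
      by simp
  qed
  moreover have "u 1 \<le> pi / 2"
    using u1 A by simp
  ultimately have kink: "weak_deriv_H1 (\<lambda>x. u x - u 0) (\<lambda>x. sin (u x) / \<beta>)"
    "integral {0..1} (energy_density \<beta> (\<lambda>x. u x - u 0) (\<lambda>x. sin (u x) / \<beta>))
       \<le> 2 / \<beta> * (W (u 1) - W (u 0))"
    using shifted_kink[OF \<open>0 < \<beta>\<close> u' \<open>mono u\<close>] by auto
  show ?thesis
  proof (rule that)
    show "(\<lambda>x. u x - u 0) \<in> J_set"
      unfolding J_set_def H1_def using kink(1) by auto
    show "weak_deriv_H1 (\<lambda>x. u x - u 0) (\<lambda>x. sin (u x) / \<beta>)"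
      by (rule kink(1))
    show "arcsin s - 2 * s * exp (-1/\<beta>) \<le> u 1 - u 0"
      using u0 u1 by (simp add: A_def)
    have "W (u 1) - W (u 0) \<le> 1 - cos A"
      using W_mono[of 0 "u 0"] u0 u1 A by (simp add: W_eq_1_minus_cos)
    then have "2 / \<beta> * (W (u 1) - W (u 0)) \<le> 2 / \<beta> * (1 - cos A)"
      using \<open>0 < \<beta>\<close> by (intro mult_left_mono) auto
    then show "integral {0..1} (energy_density \<beta> (\<lambda>x. u x - u 0) (\<lambda>x. sin (u x) / \<beta>))
        \<le> 2 / \<beta> * (1 - cos (arcsin s))"
      using kink(2) by (simp add: A_def)
  qed
qed

end

section \<open>Minimizers\<close>

locale minimizer =
  fixes \<beta> \<kappa> :: real and \<phi> g :: "real \<Rightarrow> real"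
  assumes beta_pos: "0 < \<beta>"
    and weak_deriv: "weak_deriv_H1 \<phi> g"
    and phi_0: "\<phi> 0 = 0"
    and minimal: "\<And>\<psi> h. \<psi> \<in> J_set \<Longrightarrow> weak_deriv_H1 \<psi> h \<Longrightarrow> F_energy \<beta> \<kappa> \<phi> g \<le> F_energy \<beta> \<kappa> \<psi> h"
begin

lemma phi_continuous_on: "0 \<le> u \<Longrightarrow> v \<le> 1 \<Longrightarrow> continuous_on {u..v} \<phi>"
  by (rule continuous_on_subset[OF weak_deriv_H1_continuous_on[OF weak_deriv]]) auto

lemma F_energy_ge_W_variation:
  assumes x: "x \<in> {0..1}"
  shows "(\<bar>W (\<phi> x)\<bar> + \<bar>W (\<phi> 1) - W (\<phi> x)\<bar>) / (4 * \<beta>) - \<kappa> / 2 * \<phi> 1 \<le> F_energy \<beta> \<kappa> \<phi> g"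
proof -
  define T where "T = \<bar>W (\<phi> x)\<bar> + \<bar>W (\<phi> 1) - W (\<phi> x)\<bar>"
  have "2 / \<beta> * T \<le> integral {0..x} (energy_density \<beta> \<phi> g) + integral {x..1} (energy_density \<beta> \<phi> g)"
    using Modica_Mortola_bound[OF weak_deriv beta_pos, of 0 x] Modica_Mortola_bound[OF weak_deriv beta_pos, of x 1]
      x phi_0 by (simp add: T_def distrib_left)
  also have "\<dots> = integral {0..1} (energy_density \<beta> \<phi> g)"
    using x by (intro Henstock_Kurzweil_Integration.integral_combine energy_density_integrable[OF weak_deriv]) auto
  finally have "1/8 * (2 / \<beta> * T) - \<kappa> / 2 * \<phi> 1 \<le> F_energy \<beta> \<kappa> \<phi> g"
    unfolding F_energy_eq[OF weak_deriv] phi_0 by simp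
  moreover have "T / (4 * \<beta>) = 1/8 * (2 / \<beta> * T)"
    by simp
  ultimately show ?thesis
    unfolding T_def[symmetric] by linarith
qed

lemma square_integral_le_0_on_plateau:
  assumes ab: "0 \<le> a" "a \<le> b" "b \<le> 1" and "\<phi> a = \<phi> b"
    and above: "\<And>t. t \<in> {a..b} \<Longrightarrow> (sin (\<phi> a))\<^sup>2 \<le> (sin (\<phi> t))\<^sup>2"
  shows "integral {a..b} (\<lambda>t. (g t)\<^sup>2) \<le> 0"
proof -
  define \<psi> where "\<psi> = (\<lambda>y. if y \<in> {a<..<b} then \<phi> a else \<phi> y)"
  define h where "h = (\<lambda>y. if y \<in> {a<..<b} then 0 else g y)"
  have wd: "weak_deriv_H1 \<psi> h"
    unfolding \<psi>_def h_def by (rule weak_deriv_H1_flatten[OF weak_deriv ab \<open>\<phi> a = \<phi> b\<close>])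
  have \<psi>01: "\<psi> 0 = \<phi> 0" "\<psi> 1 = \<phi> 1"
    using ab by (auto simp: \<psi>_def)
  have "\<psi> \<in> J_set"
    using wd \<psi>01 phi_0 by (auto simp: J_set_def H1_def)
  then have "F_energy \<beta> \<kappa> \<phi> g \<le> F_energy \<beta> \<kappa> \<psi> h"
    using wd by (rule minimal)
  then have "integral {0..1} (energy_density \<beta> \<phi> g) \<le> integral {0..1} (energy_density \<beta> \<psi> h)"
    unfolding F_energy_eq[OF weak_deriv] F_energy_eq[OF wd] \<psi>01 by simp
  then show ?thesis
    using energy_flatten_le[OF weak_deriv ab \<open>\<phi> a = \<phi> b\<close> above, of \<beta>]
    unfolding \<psi>_def h_def by linarith
qed

lemma const_on_plateau:
  assumes ab: "0 \<le> a" "a \<le> b" "b \<le> 1" and "\<phi> a = \<phi> b"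
    and above: "\<And>t. t \<in> {a..b} \<Longrightarrow> (sin (\<phi> a))\<^sup>2 \<le> (sin (\<phi> t))\<^sup>2"
    and t: "t \<in> {a..b}"
  shows "\<phi> t = \<phi> a"
proof -
  have "integral {a..t} (\<lambda>t. (g t)\<^sup>2) \<le> integral {a..b} (\<lambda>t. (g t)\<^sup>2)"
    using ab t
    by (intro integral_subset_le weak_deriv_H1_square_integrable_on[OF weak_deriv]) auto
  also have "\<dots> \<le> 0"
    using ab \<open>\<phi> a = \<phi> b\<close> above by (rule square_integral_le_0_on_plateau)
  finally have "integral {a..t} g = 0"
    using ab t
    by (intro integral_eq_0_if_square_integral_nonpos weak_deriv_H1_integrable_on[OF weak_deriv]
        weak_deriv_H1_square_integrable_on[OF weak_deriv]) auto
  then show ?thesis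
    using weak_deriv_H1_eq_integral[OF weak_deriv, of a t] ab t by simp
qed

end

locale small_minimizer = minimizer +
  assumes kappa_pos: "0 < \<kappa>" and kappa_beta_small: "\<kappa> * \<beta> < 1 / pi"
begin

sublocale tilted_potential "2 * \<kappa> * \<beta>"
  using beta_pos kappa_pos kappa_beta_small by unfold_locales (auto simp: field_simps)

lemma F_energy_le_competitor:
  "F_energy \<beta> \<kappa> \<phi> g \<le> (1 - cos (arcsin (2 * \<kappa> * \<beta>))) / (4 * \<beta>)
     - \<kappa> / 2 * (arcsin (2 * \<kappa> * \<beta>) - 2 * (2 * \<kappa> * \<beta>) * exp (-1/\<beta>))"
proof -
  obtain \<psi> h where J: "\<psi> \<in> J_set" and wd: "weak_deriv_H1 \<psi> h"
    and \<psi>1: "arcsin (2 * \<kappa> * \<beta>) - 2 * (2 * \<kappa> * \<beta>) * exp (-1/\<beta>) \<le> \<psi> 1"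
    and E\<psi>: "integral {0..1} (energy_density \<beta> \<psi> h) \<le> 2 / \<beta> * (1 - cos (arcsin (2 * \<kappa> * \<beta>)))"
    using competitor[OF beta_pos] by blast
  have "\<psi> 0 = 0"
    using J by (simp add: J_set_def)
  have "F_energy \<beta> \<kappa> \<phi> g \<le> F_energy \<beta> \<kappa> \<psi> h"
    using J wd by (rule minimal)
  moreover have "\<kappa> / 2 * (arcsin (2 * \<kappa> * \<beta>) - 2 * (2 * \<kappa> * \<beta>) * exp (-1/\<beta>)) \<le> \<kappa> / 2 * (\<psi> 1 - \<psi> 0)"
    using \<psi>1 \<open>\<psi> 0 = 0\<close> kappa_pos by (intro mult_left_mono) auto
  moreover have "1/8 * (2 / \<beta> * (1 - cos (arcsin (2 * \<kappa> * \<beta>)))) = (1 - cos (arcsin (2 * \<kappa> * \<beta>))) / (4 * \<beta>)"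
    using beta_pos by (simp add: field_simps)
  ultimately show ?thesis
    unfolding F_energy_eq[OF wd] using E\<psi> by linarith
qed

lemma W_variation_bound:
  assumes x: "x \<in> {0..1}"
  shows "\<bar>W (\<phi> x)\<bar> + \<bar>W (\<phi> 1) - W (\<phi> x)\<bar> - 2 * \<kappa> * \<beta> * \<phi> 1
    \<le> V (arcsin (2 * \<kappa> * \<beta>)) + 2 * (2 * \<kappa> * \<beta>)\<^sup>2 * exp (-1/\<beta>)"
proof -
  define s where "s = 2 * \<kappa> * \<beta>"
  define A where "A = arcsin s"
  define T where "T = \<bar>W (\<phi> x)\<bar> + \<bar>W (\<phi> 1) - W (\<phi> x)\<bar>"
  have "T / (4 * \<beta>) - \<kappa> / 2 * \<phi> 1 \<le> (1 - cos A) / (4 * \<beta>) - \<kappa> / 2 * (A - 2 * s * exp (-1/\<beta>))"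
    using F_energy_ge_W_variation[OF x] F_energy_le_competitor by (simp add: T_def A_def s_def)
  then have "4 * \<beta> * (T / (4 * \<beta>) - \<kappa> / 2 * \<phi> 1)
      \<le> 4 * \<beta> * ((1 - cos A) / (4 * \<beta>) - \<kappa> / 2 * (A - 2 * s * exp (-1/\<beta>)))"
    using beta_pos by (intro mult_left_mono) auto
  moreover have "4 * \<beta> * (T / (4 * \<beta>) - \<kappa> / 2 * \<phi> 1) = T - s * \<phi> 1"
    using beta_pos by (simp add: s_def field_simps)
  moreover have "4 * \<beta> * ((1 - cos A) / (4 * \<beta>) - \<kappa> / 2 * (A - 2 * s * exp (-1/\<beta>)))
      = (1 - cos A) - s * A + 2 * s\<^sup>2 * exp (-1/\<beta>)"
    using beta_pos by (simp add: s_def field_simps power2_eq_square)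
  moreover have "W A = 1 - cos A"
    using arcsin_s_pos arcsin_s_less by (intro W_eq_1_minus_cos) (auto simp: A_def s_def)
  ultimately have "T - s * \<phi> 1 \<le> W A - s * A + 2 * s\<^sup>2 * exp (-1/\<beta>)"
    by linarith
  then show ?thesis
    unfolding V_def by (simp add: T_def A_def s_def)
qed

lemma
  assumes small: "exp (-1/\<beta>) < 1/120" "exp (-1/\<beta>) < 1 - \<kappa> * \<beta> * pi"
  shows boundary_value_nonneg: "0 \<le> \<phi> 1"
    and boundary_value_le: "\<phi> 1 \<le> pi / 3"
    and boundary_value_close: "(\<phi> 1 - arcsin (2 * \<kappa> * \<beta>))\<^sup>2 \<le> 8 * (2 * \<kappa> * \<beta>)\<^sup>2 * exp (-1/\<beta>)"
    and values_below_two_thirds_pi: "x \<in> {0..1} \<Longrightarrow> \<phi> x < 2 * pi / 3"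
proof -
  let ?s = "2 * \<kappa> * \<beta>"
  define e where "e = 2 * ?s\<^sup>2 * exp (-1/\<beta>)"
  have s: "0 < ?s" "?s < 1"
    using s_less_1 beta_pos kappa_pos by simp_all
  then have "?s\<^sup>2 < 1"
    by (simp add: power_less_one_iff abs_less_iff)
  then have "e < 2 * exp (-1/\<beta>)"
    unfolding e_def using s by (intro mult_strict_right_mono) auto
  moreover have "?s\<^sup>2 * (2 * exp (-1/\<beta>)) < ?s\<^sup>2 * (1/4)"
    using small s by (intro mult_strict_left_mono) auto
  then have "e < ?s\<^sup>2 / 4"
    by (simp add: e_def)
  ultimately have e: "e < ?s\<^sup>2 / 4" "e < 1/60" "e < 2 - ?s * pi" "e < 2"
    using small by auto
  have bound: "\<bar>W (\<phi> x)\<bar> + \<bar>W (\<phi> 1) - W (\<phi> x)\<bar> - ?s * \<phi> 1 \<le> V (arcsin ?s) + e"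
    if "x \<in> {0..1}" for x
    using W_variation_bound[OF that] by (simp add: e_def)
  then have "\<bar>W (\<phi> 1)\<bar> - ?s * \<phi> 1 \<le> V (arcsin ?s) + e"
    using bound[of 0] phi_0 by simp
  note near = almost_minimal_point[OF this e(1-3)]
  show "0 \<le> \<phi> 1" "\<phi> 1 \<le> pi / 3"
    using near by auto
  show "(\<phi> 1 - arcsin ?s)\<^sup>2 \<le> 8 * ?s\<^sup>2 * exp (-1/\<beta>)"
    using near by (simp add: e_def)
  show "x \<in> {0..1} \<Longrightarrow> \<phi> x < 2 * pi / 3"
    using below_two_thirds_pi[OF bound _ _ e(4)] near by auto
qed

lemma sin_square_le_if_above_boundary_value:
  assumes small: "exp (-1/\<beta>) < 1/120" "exp (-1/\<beta>) < 1 - \<kappa> * \<beta> * pi"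
    and "t \<in> {0..1}" "\<phi> 1 \<le> \<phi> t"
  shows "(sin (\<phi> 1))\<^sup>2 \<le> (sin (\<phi> t))\<^sup>2"
proof -
  note \<phi>1 = boundary_value_nonneg[OF small] boundary_value_le[OF small]
  have "\<phi> t < 2 * pi / 3"
    using values_below_two_thirds_pi[OF small] assms by auto
  then have "sin (\<phi> 1) \<le> sin (\<phi> t)"
    using \<phi>1 assms by (intro sin_le_sin_between) auto
  moreover have "0 \<le> sin (\<phi> 1)"
    using \<phi>1 by (intro sin_ge_zero) auto
  ultimately show ?thesis
    by (simp add: power_mono)
qed

lemma values_nonneg:
  assumes small: "exp (-1/\<beta>) < 1/120" "exp (-1/\<beta>) < 1 - \<kappa> * \<beta> * pi" and x: "x \<in> {0..1}"
  shows "0 \<le> \<phi> x"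
proof (rule ccontr)
  assume "\<not> 0 \<le> \<phi> x"
  then obtain b where b: "x \<le> b" "b \<le> 1" "\<phi> b = 0"
    using IVT'[of \<phi> x 0 1, OF _ _ _ phi_continuous_on] boundary_value_nonneg[OF small] x by auto
  then have "\<phi> x = \<phi> 0"
    using x phi_0 by (intro const_on_plateau[of 0 b]) auto
  then show False
    using \<open>\<not> 0 \<le> \<phi> x\<close> phi_0 by simp
qed

lemma values_le_boundary_value:
  assumes small: "exp (-1/\<beta>) < 1/120" "exp (-1/\<beta>) < 1 - \<kappa> * \<beta> * pi" and x: "x \<in> {0..1}"
  shows "\<phi> x \<le> \<phi> 1"
proof (rule ccontr)
  assume "\<not> \<phi> x \<le> \<phi> 1"
  then obtain a where a: "a \<in> {0..x}" "\<phi> a = \<phi> 1" and above_a: "\<And>t. t \<in> {a<..x} \<Longrightarrow> \<phi> 1 < \<phi> t"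
    using last_level_crossing[of 0 x \<phi> "\<phi> 1", OF phi_continuous_on] x phi_0 boundary_value_nonneg[OF small]
    by auto
  obtain b where b: "b \<in> {x..1}" "\<phi> b = \<phi> 1" and above_b: "\<And>t. t \<in> {x..<b} \<Longrightarrow> \<phi> 1 < \<phi> t"
    using first_level_crossing[of x 1 \<phi> "\<phi> 1", OF phi_continuous_on] x \<open>\<not> \<phi> x \<le> \<phi> 1\<close> by auto
  have "\<phi> 1 \<le> \<phi> t" if t: "t \<in> {a..b}" for t
  proof (cases "t \<le> x")
    case True
    then show ?thesis
      using above_a[of t] a(2) t by (cases "t = a") auto
  next
    case False
    then show ?thesis
      using above_b[of t] b(2) t by (cases "t = b") auto
  qed
  then have "\<phi> x = \<phi> a"
    using a b x sin_square_le_if_above_boundary_value[OF small]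
    by (intro const_on_plateau[of a b]) auto
  then show False
    using a \<open>\<not> \<phi> x \<le> \<phi> 1\<close> by simp
qed

end

locale minimizer_family =
  fixes \<kappa> :: "real \<Rightarrow> real" and \<phi> :: "real \<Rightarrow> real \<Rightarrow> real"
  assumes kappa_pos: "\<And>\<beta>. 0 < \<beta> \<Longrightarrow> 0 < \<kappa> \<beta>"
    and kappa_beta_small: "\<And>\<beta>. 0 < \<beta> \<Longrightarrow> \<kappa> \<beta> * \<beta> < 1 / pi"
    and minimizer: "\<And>\<beta>. 0 < \<beta> \<Longrightarrow> is_minimizer \<beta> (\<kappa> \<beta>) (\<phi> \<beta>)"
begin

lemma small_minimizerE:
  assumes "0 < \<beta>"
  obtains g where "small_minimizer \<beta> (\<kappa> \<beta>) (\<phi> \<beta>) g"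
proof -
  obtain g where "weak_deriv_H1 (\<phi> \<beta>) g" "\<phi> \<beta> 0 = 0"
    "\<And>\<psi> h. \<psi> \<in> J_set \<Longrightarrow> weak_deriv_H1 \<psi> h \<Longrightarrow> F_energy \<beta> (\<kappa> \<beta>) (\<phi> \<beta>) g \<le> F_energy \<beta> (\<kappa> \<beta>) \<psi> h"
    using minimizer[OF assms] unfolding is_minimizer_def J_set_def by blast
  then have "small_minimizer \<beta> (\<kappa> \<beta>) (\<phi> \<beta>) g"
    using assms kappa_pos[OF assms] kappa_beta_small[OF assms] by unfold_locales
  then show ?thesis
    by (rule that)
qed

lemma eventually_boundary_estimates:
  assumes "\<forall>\<^sub>F \<beta> in at_right 0. exp (-1/\<beta>) < 1 - \<kappa> \<beta> * \<beta> * pi"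
  shows "\<forall>\<^sub>F \<beta> in at_right 0.
    (\<phi> \<beta> 1 - arcsin (2 * \<kappa> \<beta> * \<beta>))\<^sup>2 \<le> 8 * (2 * \<kappa> \<beta> * \<beta>)\<^sup>2 * exp (-1/\<beta>) \<and>
    \<phi> \<beta> 1 \<le> pi / 3 \<and> (\<forall>x\<in>{0..1}. 0 \<le> \<phi> \<beta> x \<and> \<phi> \<beta> x \<le> \<phi> \<beta> 1)"
proof -
  have "((\<lambda>\<beta>::real. exp (-1/\<beta>)) \<longlongrightarrow> 0) (at_right 0)"
    by real_asymp
  then have "\<forall>\<^sub>F \<beta> in at_right 0. exp (-1/\<beta>) < (1/120::real)"
    by (rule order_tendstoD) simp
  then show ?thesis
    using assms eventually_at_right_less[of 0]
  proof eventually_elim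
    case (elim \<beta>)
    then obtain g where "small_minimizer \<beta> (\<kappa> \<beta>) (\<phi> \<beta>) g"
      using small_minimizerE by blast
    then interpret small_minimizer \<beta> "\<kappa> \<beta>" "\<phi> \<beta>" g .
    show ?case
      using boundary_value_close boundary_value_le values_nonneg values_le_boundary_value elim
      by (simp add: mult.assoc)
  qed
qed

lemma asymptotics_if_kappa_beta_constant:
  assumes c: "\<And>\<beta>. 0 < \<beta> \<Longrightarrow> \<kappa> \<beta> * \<beta> = c"
  shows "(\<lambda>\<beta>. \<phi> \<beta> 1 - arcsin (2 * \<kappa> \<beta> * \<beta>)) \<in> o[at_right 0](\<lambda>\<beta>. \<beta> ^ n)"
    and "\<forall>\<^sub>F \<beta> in at_right 0. \<forall>x\<in>{0..1}. 0 \<le> \<phi> \<beta> x \<and> \<phi> \<beta> x \<le> \<phi> \<beta> 1 \<and> \<phi> \<beta> 1 < pi / 2"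
proof -
  have "0 < 1 - c * pi"
    using c[of 1] kappa_beta_small[of 1] by (simp add: field_simps)
  moreover have "((\<lambda>\<beta>::real. exp (-1/\<beta>)) \<longlongrightarrow> 0) (at_right 0)"
    by real_asymp
  ultimately have "\<forall>\<^sub>F \<beta> in at_right 0. exp (-1/\<beta>) < 1 - c * pi"
    by (rule order_tendstoD(2)[rotated])
  then have "\<forall>\<^sub>F \<beta> in at_right 0. exp (-1/\<beta>) < 1 - \<kappa> \<beta> * \<beta> * pi"
    using eventually_at_right_less[of 0] by eventually_elim (simp add: c)
  note estimates = eventually_boundary_estimates[OF this]
  have "\<forall>\<^sub>F \<beta> in at_right 0. (\<phi> \<beta> 1 - arcsin (2 * \<kappa> \<beta> * \<beta>))\<^sup>2 \<le> 8 * (2 * c)\<^sup>2 * exp (-1/\<beta>)"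
    using estimates eventually_at_right_less[of 0] by eventually_elim (simp add: c mult.assoc)
  then show "(\<lambda>\<beta>. \<phi> \<beta> 1 - arcsin (2 * \<kappa> \<beta> * \<beta>)) \<in> o[at_right 0](\<lambda>\<beta>. \<beta> ^ n)"
    by (rule smallo_power_if_square_le_exp)
  show "\<forall>\<^sub>F \<beta> in at_right 0. \<forall>x\<in>{0..1}. 0 \<le> \<phi> \<beta> x \<and> \<phi> \<beta> x \<le> \<phi> \<beta> 1 \<and> \<phi> \<beta> 1 < pi / 2"
    using estimates
  proof eventually_elim
    case (elim \<beta>)
    then have "\<phi> \<beta> 1 < pi / 2"
      using pi_gt_zero by linarith
    with elim show ?case
      by blast
  qed
qed

lemma asymptotics_if_kappa_beta_tendsto_0:
  assumes lim: "((\<lambda>\<beta>. \<kappa> \<beta> * \<beta>) \<longlongrightarrow> 0) (at_right 0)"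
  shows "(\<lambda>\<beta>. \<phi> \<beta> 1 - 2 * \<kappa> \<beta> * \<beta>) \<in> o[at_right 0](\<lambda>\<beta>. \<kappa> \<beta> * \<beta>)"
proof (rule landau_o.smallI)
  fix e :: real assume "0 < e"
  have exp_lim: "((\<lambda>\<beta>::real. exp (-1/\<beta>)) \<longlongrightarrow> 0) (at_right 0)"
    by real_asymp
  define r where "r = min (1 / (2 * pi)) (sqrt (3 * e / 64))"
  have "0 < r"
    using \<open>0 < e\<close> by (simp add: r_def)
  have below_r: "\<forall>\<^sub>F \<beta> in at_right 0. \<kappa> \<beta> * \<beta> < r"
    using order_tendstoD(2)[OF lim \<open>0 < r\<close>] .
  moreover have "\<forall>\<^sub>F \<beta> in at_right 0. exp (-1/\<beta>) < (1/2::real)"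
    using order_tendstoD(2)[OF exp_lim, of "1/2"] by simp
  ultimately have "\<forall>\<^sub>F \<beta> in at_right 0. exp (-1/\<beta>) < 1 - \<kappa> \<beta> * \<beta> * pi"
  proof eventually_elim
    case (elim \<beta>)
    then have "\<kappa> \<beta> * \<beta> * pi \<le> 1 / 2"
      using pi_gt_zero by (simp add: r_def field_simps)
    then show ?case
      using elim by linarith
  qed
  then have "\<forall>\<^sub>F \<beta> in at_right 0.
    (\<phi> \<beta> 1 - arcsin (2 * \<kappa> \<beta> * \<beta>))\<^sup>2 \<le> 8 * (2 * \<kappa> \<beta> * \<beta>)\<^sup>2 * exp (-1/\<beta>) \<and>
    \<phi> \<beta> 1 \<le> pi / 3 \<and> (\<forall>x\<in>{0..1}. 0 \<le> \<phi> \<beta> x \<and> \<phi> \<beta> x \<le> \<phi> \<beta> 1)"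
    by (rule eventually_boundary_estimates)
  moreover have "\<forall>\<^sub>F \<beta> in at_right 0. exp (-1/\<beta>) < e\<^sup>2 / 128"
    using order_tendstoD(2)[OF exp_lim, of "e\<^sup>2 / 128"] \<open>0 < e\<close> by simp
  ultimately show "\<forall>\<^sub>F \<beta> in at_right 0. norm (\<phi> \<beta> 1 - 2 * \<kappa> \<beta> * \<beta>) \<le> e * norm (\<kappa> \<beta> * \<beta>)"
    using below_r eventually_at_right_less[of 0]
  proof eventually_elim
    case (elim \<beta>)
    define s where "s = 2 * \<kappa> \<beta> * \<beta>"
    have "0 < s" "s < 2 / pi"
      using kappa_pos[of \<beta>] kappa_beta_small[of \<beta>] elim by (auto simp: s_def field_simps)
    then interpret tilted_potential s
      by unfold_locales
    have "\<kappa> \<beta> * \<beta> \<le> sqrt (3 * e / 64)"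
      using elim by (simp add: r_def)
    then have "(\<kappa> \<beta> * \<beta>)\<^sup>2 \<le> (sqrt (3 * e / 64))\<^sup>2"
      using \<open>0 < s\<close> by (intro power_mono) (auto simp: s_def mult.commute)
    then have "s\<^sup>2 \<le> 3 * e / 16"
      using \<open>0 < e\<close> by (simp add: s_def power_mult_distrib)
    then have "\<bar>\<phi> \<beta> 1 - s\<bar> \<le> e * s / 2"
      using elim \<open>0 < e\<close> by (intro abs_diff_s_le_if_close_to_arcsin_s[of _ "exp (-1/\<beta>)"]) (auto simp: s_def)
    then show ?case
      using kappa_pos[of \<beta>] elim by (simp add: s_def abs_mult)
  qed
qed

end

theorem proposition3:
  fixes \<kappa> :: "real \<Rightarrow> real" and \<phi> :: "real \<Rightarrow> real \<Rightarrow> real"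
  assumes kpos: "\<And>\<beta>. \<beta> > 0 \<Longrightarrow> \<kappa> \<beta> > 0"
    and ksmall: "\<And>\<beta>. \<beta> > 0 \<Longrightarrow> \<kappa> \<beta> * \<beta> < 1 / pi"
    and mini: "\<And>\<beta>. \<beta> > 0 \<Longrightarrow> is_minimizer \<beta> (\<kappa> \<beta>) (\<phi> \<beta>)"
  shows "((\<exists>c. \<forall>\<beta>>0. \<kappa> \<beta> * \<beta> = c) \<longrightarrow>
            (\<forall>n::nat. n \<ge> 1 \<longrightarrow>
               (\<lambda>\<beta>. \<phi> \<beta> 1 - arcsin (2 * \<kappa> \<beta> * \<beta>)) \<in> o[at_right 0](\<lambda>\<beta>. \<beta> ^ n)) \<and>
            (\<forall>\<^sub>F \<beta> in at_right 0. \<forall>x\<in>{0..1}.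
               0 \<le> \<phi> \<beta> x \<and> \<phi> \<beta> x \<le> \<phi> \<beta> 1 \<and> \<phi> \<beta> 1 < pi / 2))
       \<and> (((\<lambda>\<beta>. \<kappa> \<beta> * \<beta>) \<longlongrightarrow> 0) (at_right 0) \<longrightarrow>
            (\<lambda>\<beta>. \<phi> \<beta> 1 - 2 * \<kappa> \<beta> * \<beta>) \<in> o[at_right 0](\<lambda>\<beta>. \<kappa> \<beta> * \<beta>))"
proof -
  interpret minimizer_family \<kappa> \<phi>
    using kpos ksmall mini by unfold_locales
  show ?thesis
    using asymptotics_if_kappa_beta_constant asymptotics_if_kappa_beta_tendsto_0 by blast
qed

end
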